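(* Let $\chi:\mathcal H\to\mathcal H_L^\chi\otimes\mathcal H_R^\chi$ be a balanced splitting map such that $\mathcal A=\mathrm{stloc}_L(\chi)$ is a factor. Then there exist finite index sets $L,R,M$, an orthonormal basis $\{e_{l,r}\}_{(l,r)\in L\times R}$ of $\mathcal H$, an orthonormal family $\{f_{l,m}\}_{(l,m)\in L\times M}$ in $\mathcal H_L^\chi$, an orthonormal family $\{g_{r,m}\}_{(r,m)\in R\times M}$ in $\mathcal H_R^\chi$, and complex numbers $(\lambda_m)_{m\in M}$ such that $\chi(e_{l,r})=\sum_{m\in M}\lambda_m\,f_{l,m}\otimes g_{r,m}$ for all $l,r$.
   Context: All Hilbert spaces are finite-dimensional and complex. A splitting map on $\mathcal H$ is an isometry $\chi:\mathcal H\to\mathcal H_L^\chi\otimes\mathcal H_R^\chi$. $A\in\mathcal L(\mathcal H)$ is strictly left $\chi$-local if there is $\tilde A\in\mathcal L(\mathcal H_L^\chi)$ with $A\chi^\dagger=\chi^\dagger(\tilde A\otimes\mathbb 1)$ and $\chi A=(\tilde A\otimes\mathbb 1)\chi$ (set $\mathrm{stloc}_L(\chi)$); strictly right $\chi$-local is defined symmetrically with $\mathbb 1\otimes\tilde A$, $\tilde A\in\mathcal L(\mathcal H_R^\chi)$ (set $\mathrm{stloc}_R(\chi)$). $\chi$ is balanced if $\mathrm{stloc}_R(\chi)=\mathrm{stloc}_L(\chi)'$ (commutant in $\mathcal L(\mathcal H)$). A Von Neumann algebra $\mathcal A\subseteq\mathcal L(\mathcal H)$ is a factor if $\mathcal A\cap\mathcal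 A'=\mathbb C\mathbb 1_{\mathcal H}$. *)

theory Defs
  imports "HOL-Analysis.Analysis"
begin

text \<open>Finite-dimensional complex Hilbert spaces are modelled as coordinate spaces
  complex^'n over a finite index type 'n, with the standard inner product
  (antilinear in the first argument).
  The tensor product H_L (x) H_R is complex^('l * 'r).\<close>

definition cinner :: "complex^'n::finite \<Rightarrow> complex^'n \<Rightarrow> complex" where
  "cinner x y = (\<Sum>i\<in>UNIV. cnj (x $ i) * y $ i)"

definition cadj :: "complex^'n::finite^'m::finite \<Rightarrow> complex^'m^'n" where
  "cadj A = (\<chi> i j. cnj (A $ j $ i))"

definition tensor_vec :: "complex^'l::finite \<Rightarrow> complex^'r::finite \<Rightarrow> complex^('l \<times> 'r)" where
  "tensor_vec f g = (\<chi> p. f $ fst p * g $ snd p)"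

definition tensor_op :: "complex^'l::finite^'l \<Rightarrow> complex^'r::finite^'r \<Rightarrow> complex^('l \<times> 'r)^('l \<times> 'r)" where
  "tensor_op A B = (\<chi> p q. A $ fst p $ fst q * B $ snd p $ snd q)"

definition splitting_map :: "complex^'h::finite^('l::finite \<times> 'r::finite) \<Rightarrow> bool" where
  "splitting_map X \<longleftrightarrow> cadj X ** X = mat 1"

definition stloc_L :: "complex^'h::finite^('l::finite \<times> 'r::finite) \<Rightarrow> (complex^'h^'h) set" where
  "stloc_L X = {A. \<exists>At :: complex^'l^'l.
      A ** cadj X = cadj X ** tensor_op At (mat 1) \<and> X ** A = tensor_op At (mat 1) ** X}"

definition stloc_R :: "complex^'h::finite^('l::finite \<times> 'r::finite) \<Rightarrow> (complex^'h^'h) set" where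
  "stloc_R X = {A. \<exists>At :: complex^'r^'r.
      A ** cadj X = cadj X ** tensor_op (mat 1) At \<and> X ** A = tensor_op (mat 1) At ** X}"

definition commutant :: "(complex^'h::finite^'h) set \<Rightarrow> (complex^'h^'h) set" where
  "commutant S = {B. \<forall>A\<in>S. A ** B = B ** A}"

definition balanced :: "complex^'h::finite^('l::finite \<times> 'r::finite) \<Rightarrow> bool" where
  "balanced X \<longleftrightarrow> stloc_R X = commutant (stloc_L X)"

definition von_neumann_algebra :: "(complex^'h::finite^'h) set \<Rightarrow> bool" where
  "von_neumann_algebra S \<longleftrightarrow> (\<forall>A\<in>S. cadj A \<in> S) \<and> commutant (commutant S) = S"

definition factor :: "(complex^'h::finite^'h) set \<Rightarrow> bool" where
  "factor S \<longleftrightarrow> von_neumann_algebra S \<and> S \<inter> commutant S = range mat"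

end

theory Submission
  imports Defs
begin

(* A finite-dimensional factor A is a full matrix algebra acting on one tensor factor of H:
   decomposing the identity into minimal projections of A and connecting them by partial
   isometries in A gives an orthonormal basis e(q,k) of H and matrix units E(q,q') in A and
   F(k,k') in the commutant A', acting on this basis as |q><q'| (x) 1 and 1 (x) |k><k'|.
   Balancedness makes the operators of A strictly left local and those of A' strictly right
   local, so chi e(q,k) = (S q (x) T k) psi with psi = chi e(q0,k0). For a Schmidt
   decomposition psi = sum_m lam_m a_m (x) b_m, the relation E(q0,q) E(q',q0) = delta E(q0,q0)
   forces (S q)^* (S q') a_m = delta a_m, so the vectors f(q,m) = S q a_m are orthonormal,
   and likewise g(k,m) = T k b_m. *)

section \<open>Inner product, adjoint and matrix algebra\<close>

lemma cinner_add_left: "cinner (x + y) z = cinner x z + cinner y z"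
  by (simp add: cinner_def sum.distrib distrib_right)

lemma cinner_add_right: "cinner x (y + z) = cinner x y + cinner x z"
  by (simp add: cinner_def sum.distrib distrib_left)

lemma cinner_diff_right: "cinner x (y - z) = cinner x y - cinner x z"
  by (simp add: cinner_def sum_subtractf right_diff_distrib)

lemma cinner_scale_left: "cinner (c *s x) y = cnj c * cinner x y"
  by (simp add: cinner_def sum_distrib_left mult_ac)

lemma cinner_scale_right: "cinner x (c *s y) = c * cinner x y"
  by (simp add: cinner_def sum_distrib_left mult_ac)

lemma cinner_zero_left [simp]: "cinner 0 x = 0"
  and cinner_zero_right [simp]: "cinner x 0 = 0"
  by (simp_all add: cinner_def)

lemma cinner_sum_right: "cinner x (sum f S) = (\<Sum>s\<in>S. cinner x (f s))"
  by (induct S rule: infinite_finite_induct) (auto simp: cinner_add_right)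

lemma cnj_cinner: "cnj (cinner x y) = cinner y x"
  by (simp add: cinner_def mult.commute)

lemma inner_vec_eq_Re_cinner: "inner x y = Re (cinner x y)"
  by (simp add: inner_vec_def cinner_def inner_complex_def)

lemma cinner_self: "cinner x x = complex_of_real ((norm x)\<^sup>2)"
proof -
  have "Re (cinner x x) = (norm x)\<^sup>2"
    by (simp add: power2_norm_eq_inner inner_vec_eq_Re_cinner)
  moreover have "Im (cinner x x) = 0"
    by (simp add: cinner_def)
  ultimately show ?thesis
    by (simp add: complex_eq_iff)
qed

lemma cinner_self_eq_0 [simp]: "cinner x x = 0 \<longleftrightarrow> x = 0"
  by (simp add: cinner_self)

lemma cinner_normalize:
  assumes "x \<noteq> 0"
  shows "cinner (complex_of_real (1 / norm x) *s x) (complex_of_real (1 / norm x) *s x) = 1"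
proof -
  let ?c = "complex_of_real (1 / norm x)"
  have "cinner (?c *s x) (?c *s x) = cnj ?c * ?c * cinner x x"
    by (simp add: cinner_scale_left cinner_scale_right)
  also have "\<dots> = 1"
    using assms by (simp add: cinner_self power2_eq_square)
  finally show ?thesis .
qed

lemma cadj_cadj [simp]: "cadj (cadj A) = A"
  by (simp add: cadj_def vec_eq_iff)

lemma cadj_mult: "cadj (A ** B) = cadj B ** cadj A"
  by (simp add: cadj_def matrix_matrix_mult_def vec_eq_iff mult.commute)

lemma cadj_add: "cadj (A + B) = cadj A + cadj B"
  by (simp add: cadj_def vec_eq_iff)

lemma cadj_diff: "cadj (A - B) = cadj A - cadj B"
  by (simp add: cadj_def vec_eq_iff)

lemma cadj_mat [simp]: "cadj (mat c) = mat (cnj c)"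
  by (simp add: cadj_def mat_def vec_eq_iff)

lemma cadj_zero [simp]: "cadj 0 = 0"
  by (simp add: cadj_def vec_eq_iff)

lemma cadj_sum: "cadj (sum f S) = (\<Sum>s\<in>S. cadj (f s))"
  by (induct S rule: infinite_finite_induct) (auto simp: cadj_add)

lemma cinner_adj_left: "cinner (A *v x) y = cinner x (cadj A *v y)"
  unfolding cinner_def cadj_def matrix_vector_mult_def
  by (simp add: sum_distrib_left sum_distrib_right mult_ac) (rule sum.swap)

lemma cinner_adj_right: "cinner x (A *v y) = cinner (cadj A *v x) y"
  by (metis cinner_adj_left cadj_cadj)

lemma matrix_vector_mult_mat [simp]: "mat c *v x = c *s x"
  by (simp add: matrix_vector_mult_def mat_def vec_eq_iff if_distrib if_distribR cong: if_cong)

lemma matrix_vector_mult_sum_left: "sum f S *v x = (\<Sum>s\<in>S. f s *v x)"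
  by (induct S rule: infinite_finite_induct) (auto simp: matrix_vector_mult_add_rdistrib)

lemma matrix_nonzero_on_vector: "A \<noteq> 0 \<Longrightarrow> \<exists>x. A *v x \<noteq> 0"
  by (metis matrix_eq matrix_vector_mult_0)

lemma matrix_add_rdistrib: "(A + B) ** C = A ** C + B ** (C :: 'a::semiring_1^'n^'m)"
  by (simp add: matrix_matrix_mult_def vec_eq_iff sum.distrib distrib_right)

lemma matrix_diff_ldistrib: "A ** (B - C) = A ** B - A ** (C :: 'a::ring_1^'n^'m)"
  by (simp add: matrix_matrix_mult_def vec_eq_iff sum_subtractf left_diff_distrib right_diff_distrib)

lemma matrix_diff_rdistrib: "(A - B) ** C = A ** C - B ** (C :: 'a::ring_1^'n^'m)"
  by (simp add: matrix_matrix_mult_def vec_eq_iff sum_subtractf left_diff_distrib right_diff_distrib)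

lemma mat_mult_commute: "mat c ** A = A ** (mat c :: complex^'n^'n)"
  by (simp add: matrix_eq flip: matrix_vector_mul_assoc) (simp add: vec.scale)

lemma mat_mult_mat: "mat a ** mat b = (mat (a * b) :: complex^'n^'n)"
  by (simp add: matrix_eq flip: matrix_vector_mul_assoc)

lemma mat_add_mat: "mat a + mat b = (mat (a + b) :: complex^'n^'n)"
  by (simp add: mat_def vec_eq_iff)

lemma mat_mult_component [simp]: "(mat c ** B) $ i $ j = c * B $ i $ j"
  by (simp add: matrix_matrix_mult_def mat_def if_distrib if_distribR cong: if_cong)

lemma cadj_mat_mult: "cadj (mat c ** B) = mat (cnj c) ** cadj (B :: complex^'n^'n)"
  by (simp add: cadj_mult mat_mult_commute)

lemma mat_eq_mat_iff [simp]: "(mat a :: complex^'n^'n) = mat b \<longleftrightarrow> a = b"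
proof
  assume "mat a = (mat b :: complex^'n^'n)"
  then have "(mat a :: complex^'n^'n) $ i $ i = mat b $ i $ i" for i
    by simp
  then show "a = b"
    by (simp add: mat_def)
qed simp

lemma matrix_mul_idem_right: "p ** p = p \<Longrightarrow> A ** p ** p = A ** p"
  by (simp flip: matrix_mul_assoc)

lemma matrix_mult_sum_left: "(\<Sum>s\<in>S. f s) ** B = (\<Sum>s\<in>S. f s ** B)"
  by (induct S rule: infinite_finite_induct) (auto simp: matrix_add_rdistrib)

lemma compress_mat_mult: "p ** (mat c ** Z) ** q = mat c ** (p ** Z ** (q :: complex^'n^'n))"
  by (simp add: matrix_mul_assoc mat_mult_commute[of c p])

lemma cadj_mult_self_eq_0: "cadj A ** A = 0 \<longleftrightarrow> A = 0"
proof
  assume "cadj A ** A = 0"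
  then have "cinner (A *v x) (A *v x) = 0" for x
    by (simp add: cinner_adj_left matrix_vector_mul_assoc)
  then show "A = 0"
    by (simp add: matrix_eq)
qed simp

section \<open>Orthonormal eigenbases and orthogonal projections\<close>

definition orthonormal_on :: "'i set \<Rightarrow> ('i \<Rightarrow> complex^'n::finite) \<Rightarrow> bool" where
  "orthonormal_on I u \<longleftrightarrow> (\<forall>i\<in>I. \<forall>j\<in>I. cinner (u i) (u j) = (if i = j then 1 else 0))"

lemma orthonormal_on_reindex:
  assumes "orthonormal_on I u" "inj_on h J" "h ` J \<subseteq> I"
  shows "orthonormal_on J (\<lambda>j. u (h j))"
  using assms unfolding orthonormal_on_def inj_on_def by (auto simp: subset_iff)

lemma scaleR_eq_scale_of_real: "r *\<^sub>R (x :: complex^'n) = complex_of_real r *s x"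
  by (simp add: scaleR_vec_def vector_scalar_mult_def vec_eq_iff scaleR_conv_of_real)

lemma norm_scale_of_real: "norm (complex_of_real r *s (x :: complex^'n)) = \<bar>r\<bar> * norm x"
  by (metis scaleR_eq_scale_of_real norm_scaleR)

lemma vec_subspace_imp_subspace: "vec.subspace S \<Longrightarrow> subspace (S :: (complex^'n) set)"
  unfolding subspace_def vec.subspace_def scaleR_eq_scale_of_real by blast

lemma quadratic_le_0_imp_linear_coeff_0:
  fixes a b :: real
  assumes "\<And>t. a * t\<^sup>2 + b * t \<le> 0"
  shows "b = 0"
proof -
  define d where "d = \<bar>a\<bar> + 1"
  have "d > 0" "a + d > 0"
    by (simp_all add: d_def)
  have "a * (b / d)\<^sup>2 + b * (b / d) = b\<^sup>2 * (a + d) / d\<^sup>2"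
    using \<open>d > 0\<close> by (simp add: field_simps power2_eq_square)
  then have "b\<^sup>2 * (a + d) \<le> 0"
    using assms[of "b / d"] \<open>d > 0\<close> by (simp add: divide_le_0_iff)
  then have "b\<^sup>2 \<le> 0"
    using \<open>a + d > 0\<close> by (simp add: mult_le_0_iff)
  then show ?thesis
    by simp
qed

lemma hermitian_eigvec_of_max:
  fixes h :: "complex^'n^'n"
  assumes S: "vec.subspace S" and herm: "cadj h = h" and inv: "\<forall>v\<in>S. h *v v \<in> S"
    and w: "w \<in> S" and le: "\<And>z. z \<in> S \<Longrightarrow> Re (cinner z (h *v z)) \<le> \<mu> * Re (cinner z z)"
    and eq: "Re (cinner w (h *v w)) = \<mu> * Re (cinner w w)"
  shows "h *v w = complex_of_real \<mu> *s w"
proof -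
  define u where "u = h *v w - complex_of_real \<mu> *s w"
  have uS: "u \<in> S"
    unfolding u_def using S w inv by (simp add: vec.subspace_diff vec.subspace_scale)
  have hw_u: "cinner w (h *v u) = cnj (cinner u (h *v w))"
    by (metis cinner_adj_right cnj_cinner herm)
  have w_u: "cinner w u = cnj (cinner u w)"
    by (simp add: cnj_cinner)
  have uu: "Re (cinner u (h *v w)) - \<mu> * Re (cinner u w) = Re (cinner u u)"
    by (simp add: u_def cinner_diff_right cinner_scale_right)
  \<comment> \<open>Perturb \<open>w\<close> along its residual \<open>u\<close>.\<close>
  have "(Re (cinner u (h *v u)) - \<mu> * Re (cinner u u)) * t\<^sup>2 + (2 * Re (cinner u u)) * t \<le> 0" for t
  proof -
    let ?z = "w + complex_of_real t *s u"
    have "?z \<in> S"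
      using S w uS by (simp add: vec.subspace_add vec.subspace_scale)
    from le[OF this] have "Re (cinner w (h *v w)) + 2 * t * Re (cinner u (h *v w)) + t\<^sup>2 * Re (cinner u (h *v u))
        \<le> \<mu> * (Re (cinner w w) + 2 * t * Re (cinner u w) + t\<^sup>2 * Re (cinner u u))"
      by (simp add: matrix_vector_right_distrib vec.scale cinner_add_left cinner_add_right
          cinner_scale_left cinner_scale_right hw_u w_u power2_eq_square algebra_simps)
    then show ?thesis
      using eq uu by (simp add: algebra_simps)
  qed
  then have "2 * Re (cinner u u) = 0"
    by (rule quadratic_le_0_imp_linear_coeff_0)
  then have "u = 0"
    by (simp add: cinner_self)
  then show ?thesis
    by (simp add: u_def)
qed

lemma hermitian_eigvec_exists:
  fixes h :: "complex^'n^'n"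
  assumes S: "vec.subspace S" and nontriv: "S \<noteq> {0}"
    and herm: "cadj h = h" and inv: "\<forall>v\<in>S. h *v v \<in> S"
  shows "\<exists>w\<in>S. cinner w w = 1 \<and> (\<exists>\<mu>::real. h *v w = complex_of_real \<mu> *s w)"
proof -
  define f where "f z = Re (cinner z (h *v z))" for z
  define K where "K = sphere 0 1 \<inter> S"
  have "compact K"
    unfolding K_def using closed_subspace[OF vec_subspace_imp_subspace[OF S]]
    by (intro compact_Int_closed) auto
  have normalize: "complex_of_real (1 / norm z) *s z \<in> K" if "z \<in> S" "z \<noteq> 0" for z
    using that S by (simp add: K_def vec.subspace_scale norm_scale_of_real del: of_real_divide)
  then have "K \<noteq> {}"
    using nontriv vec.subspace_0[OF S] by blast
  moreover have "continuous_on K f"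
    unfolding f_def cinner_def matrix_vector_mult_def
    by (intro continuous_intros linear_continuous_on[OF bounded_linear_vec_nth])
  ultimately obtain w where wK: "w \<in> K" and wmax: "\<And>y. y \<in> K \<Longrightarrow> f y \<le> f w"
    using continuous_attains_sup[OF \<open>compact K\<close>] by blast
  have wS: "w \<in> S" and ww: "cinner w w = 1"
    using wK by (auto simp: K_def cinner_self)
  have "f z \<le> f w * Re (cinner z z)" if "z \<in> S" for z
  proof (cases "z = 0")
    case False
    let ?n = "norm z"
    have "z = complex_of_real ?n *s (complex_of_real (1 / ?n) *s z)"
      using False by (simp add: vector_smult_assoc flip: of_real_mult)
    moreover have "f (complex_of_real c *s y) = c\<^sup>2 * f y" for c y
      by (simp add: f_def vec.scale cinner_scale_left cinner_scale_right power2_eq_square)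
    ultimately have "f z = ?n\<^sup>2 * f (complex_of_real (1 / ?n) *s z)"
      by metis
    also have "\<dots> \<le> ?n\<^sup>2 * f w"
      using wmax[OF normalize[OF that False]] by (simp add: mult_left_mono)
    finally show ?thesis
      by (simp add: cinner_self mult.commute)
  qed (simp add: f_def)
  then have "h *v w = complex_of_real (f w) *s w"
    using hermitian_eigvec_of_max[OF S herm inv wS] ww by (simp add: f_def)
  then show ?thesis
    using wS ww by blast
qed

lemma hermitian_eigenbasis:
  fixes h :: "complex^'n^'n"
  assumes "vec.subspace S" "cadj h = h" "\<forall>v\<in>S. h *v v \<in> S"
  shows "\<exists>B. finite B \<and> B \<subseteq> S \<and> orthonormal_on B id \<and> (\<forall>v\<in>S. v = (\<Sum>b\<in>B. cinner b v *s b))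
           \<and> (\<forall>b\<in>B. \<exists>\<mu>::real. h *v b = complex_of_real \<mu> *s b)"
  using assms
proof (induction "vec.dim S" arbitrary: S rule: less_induct)
  case less
  note S = less.prems(1) and herm = less.prems(2) and inv = less.prems(3)
  show ?case
  proof (cases "S = {0}")
    case True
    then show ?thesis
      by (intro exI[of _ "{}"]) (auto simp: orthonormal_on_def)
  next
    case False
    obtain w \<mu> where wS: "w \<in> S" and ww: "cinner w w = 1" and hw: "h *v w = complex_of_real \<mu> *s w"
      using hermitian_eigvec_exists[OF S False herm inv] by blast
    define S' where "S' = {v\<in>S. cinner w v = 0}"
    have S': "vec.subspace S'"
      using S by (auto simp: S'_def vec.subspace_def cinner_add_right cinner_scale_right)
    have inv': "\<forall>v\<in>S'. h *v v \<in> S'"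
      using inv by (auto simp: S'_def cinner_adj_right herm hw cinner_scale_left)
    have "S' \<subseteq> S" "w \<notin> S'"
      using ww by (auto simp: S'_def)
    then have "S' \<subset> S"
      using wS by blast
    then have dim_less: "vec.dim S' < vec.dim S"
      using S S' by (intro vec.dim_psubset) (simp add: vec.span_eq_iff[THEN iffD2])
    obtain B' where fin: "finite B'" and B'S': "B' \<subseteq> S'" and onB': "orthonormal_on B' id"
      and span: "\<forall>v\<in>S'. v = (\<Sum>b\<in>B'. cinner b v *s b)"
      and eig: "\<forall>b\<in>B'. \<exists>\<mu>::real. h *v b = complex_of_real \<mu> *s b"
      using less.hyps[OF dim_less S' herm inv'] by blast
    have wb: "cinner w b = 0" "cinner b w = 0" if "b \<in> B'" for b
      using B'S' that cnj_cinner[of w b] by (auto simp: S'_def)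
    have "w \<notin> B'"
      using wb ww by force
    have "orthonormal_on (insert w B') id"
      using onB' ww wb by (auto simp: orthonormal_on_def)
    moreover have "v = (\<Sum>b\<in>insert w B'. cinner b v *s b)" if "v \<in> S" for v
    proof -
      let ?v' = "v - cinner w v *s w"
      have "?v' \<in> S'"
        using S that wS ww by (simp add: S'_def vec.subspace_diff vec.subspace_scale
            cinner_diff_right cinner_scale_right)
      then have "?v' = (\<Sum>b\<in>B'. cinner b ?v' *s b)"
        using span by blast
      also have "\<dots> = (\<Sum>b\<in>B'. cinner b v *s b)"
        using wb by (intro sum.cong) (simp_all add: cinner_diff_right cinner_scale_right)
      finally show ?thesis
        using fin \<open>w \<notin> B'\<close> by (simp add: algebra_simps)
    qed
    ultimately show ?thesis
      using fin B'S' wS eig hw \<open>w \<notin> B'\<close> by (intro exI[of _ "insert w B'"]) (auto simp: S'_def)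
  qed
qed

definition outer :: "complex^'n::finite \<Rightarrow> complex^'n \<Rightarrow> complex^'n^'n" where
  "outer u w = (\<chi> i j. u $ i * cnj (w $ j))"

lemma outer_mult_vector: "outer u w *v v = cinner w v *s u"
  by (simp add: outer_def matrix_vector_mult_def cinner_def vec_eq_iff sum_distrib_left mult_ac)

lemma cadj_outer: "cadj (outer u w) = outer w u"
  by (simp add: outer_def cadj_def vec_eq_iff mult.commute)

definition is_projection :: "complex^'n::finite^'n \<Rightarrow> bool" where
  "is_projection p \<longleftrightarrow> cadj p = p \<and> p ** p = p"

definition proj_range :: "complex^'n::finite^'n \<Rightarrow> (complex^'n) set" where
  "proj_range p = {v. p *v v = v}"

lemma subspace_proj_range: "vec.subspace (proj_range p)"
  by (auto simp: proj_range_def vec.subspace_def matrix_vector_right_distrib vec.scale)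

lemma proj_range_image: "p ** p = p \<Longrightarrow> p *v v \<in> proj_range p"
  by (simp add: proj_range_def matrix_vector_mul_assoc)

lemma projection_onto_subspace:
  assumes S: "vec.subspace S"
  shows "\<exists>P. is_projection P \<and> proj_range P = S"
proof -
  obtain B where "finite B" and BS: "B \<subseteq> S" and span: "\<forall>v\<in>S. v = (\<Sum>b\<in>B. cinner b v *s b)"
    using hermitian_eigenbasis[OF S, of 0] vec.subspace_0[OF S] by auto
  define P where "P = (\<Sum>b\<in>B. outer b b)"
  have Pv: "P *v v = (\<Sum>b\<in>B. cinner b v *s b)" for v
    by (simp add: P_def matrix_vector_mult_sum_left outer_mult_vector)
  have PS: "P *v v \<in> S" for v
    unfolding Pv using S BS by (intro vec.subspace_sum vec.subspace_scale) auto
  have range: "proj_range P = S"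
    using PS span Pv by (auto simp: proj_range_def) metis
  have "P *v (P *v v) = P *v v" for v
    using PS[of v] range by (auto simp: proj_range_def)
  then have "P ** P = P"
    by (simp add: matrix_eq flip: matrix_vector_mul_assoc)
  moreover have "cadj P = P"
    by (simp add: P_def cadj_sum cadj_outer)
  ultimately show ?thesis
    using range by (auto simp: is_projection_def)
qed

lemma projection_compress_invariant:
  assumes "p ** p = p" and "\<forall>v\<in>proj_range p. T *v v \<in> proj_range p"
  shows "p ** T ** p = T ** p"
  using assms proj_range_image[OF assms(1)]
  by (simp add: matrix_eq proj_range_def flip: matrix_vector_mul_assoc)

lemma projection_commute_invariant:
  assumes P: "is_projection P"
    and inv: "\<forall>v\<in>proj_range P. T *v v \<in> proj_range P"
    and inv_adj: "\<forall>v\<in>proj_range P. cadj T *v v \<in> proj_range P"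
  shows "T ** P = P ** T"
proof -
  have PP: "P ** P = P" and Padj: "cadj P = P"
    using P by (auto simp: is_projection_def)
  have "T ** P = P ** T ** P"
    using projection_compress_invariant[OF PP inv] by simp
  also have "\<dots> = cadj (P ** cadj T ** P)"
    by (simp add: cadj_mult Padj matrix_mul_assoc)
  also have "\<dots> = P ** T"
    using projection_compress_invariant[OF PP inv_adj] by (simp add: cadj_mult Padj)
  finally show ?thesis .
qed

section \<open>Minimal projections of von Neumann algebras\<close>

lemma mat_in_commutant: "mat c \<in> commutant S"
  by (simp add: commutant_def mat_mult_commute)

lemma commutant_mult: "a \<in> commutant S \<Longrightarrow> b \<in> commutant S \<Longrightarrow> a ** b \<in> commutant S"
  by (auto simp: commutant_def) (metis matrix_mul_assoc)

lemma commutant_add: "a \<in> commutant S \<Longrightarrow> b \<in> commutant S \<Longrightarrow> a + b \<in> commutant S"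
  by (auto simp: commutant_def matrix_add_ldistrib matrix_add_rdistrib)

lemma commutant_diff: "a \<in> commutant S \<Longrightarrow> b \<in> commutant S \<Longrightarrow> a - b \<in> commutant S"
  by (auto simp: commutant_def matrix_diff_ldistrib matrix_diff_rdistrib)

lemma commutant_cadj:
  assumes "\<forall>a\<in>S. cadj a \<in> S" and "b \<in> commutant S"
  shows "cadj b \<in> commutant S"
  unfolding commutant_def mem_Collect_eq
proof
  fix a assume "a \<in> S"
  then have "cadj a ** b = b ** cadj a"
    using assms by (simp add: commutant_def)
  then show "a ** cadj b = cadj b ** a"
    by (metis cadj_cadj cadj_mult)
qed

definition minimal_projection :: "(complex^'n::finite^'n) set \<Rightarrow> complex^'n^'n \<Rightarrow> bool" where
  "minimal_projection A p \<longleftrightarrow> p \<in> A \<and> is_projection p \<and> p \<noteq> 0 \<and>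
     (\<forall>q\<in>A. is_projection q \<and> q \<noteq> 0 \<and> p ** q = q \<longrightarrow> q = p)"

lemma dim_proj_range_less:
  assumes p: "is_projection p" and q: "is_projection q" and below: "p ** q = q" and "q \<noteq> p"
  shows "vec.dim (proj_range q) < vec.dim (proj_range p)"
proof -
  have padj: "cadj p = p" and pp: "p ** p = p" and qadj: "cadj q = q"
    using p q by (auto simp: is_projection_def)
  have "proj_range q \<subseteq> proj_range p"
  proof
    fix v assume "v \<in> proj_range q"
    then have "p *v v = (p ** q) *v v"
      by (simp add: proj_range_def flip: matrix_vector_mul_assoc)
    then show "v \<in> proj_range p"
      using \<open>v \<in> proj_range q\<close> by (simp add: below proj_range_def)
  qed
  moreover have "proj_range q \<noteq> proj_range p"
  proof
    assume eq: "proj_range q = proj_range p"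
    have "p *v v \<in> proj_range q" for v
      using proj_range_image[OF pp, of v] eq by simp
    then have "q *v (p *v v) = p *v v" for v
      by (simp add: proj_range_def)
    then have "q ** p = p"
      by (simp add: matrix_eq flip: matrix_vector_mul_assoc)
    then have "p = cadj (q ** p)"
      using padj by simp
    also have "\<dots> = q"
      by (simp add: cadj_mult padj qadj below)
    finally show False
      using \<open>q \<noteq> p\<close> by simp
  qed
  ultimately show ?thesis
    by (intro vec.dim_psubset) (auto simp: vec.span_eq_iff[THEN iffD2] subspace_proj_range)
qed

lemma minimal_projection_below:
  assumes "r \<in> A" "is_projection r" "r \<noteq> 0"
  shows "\<exists>p. minimal_projection A p \<and> r ** p = p"
proof -
  let ?P = "\<lambda>p. p \<in> A \<and> is_projection p \<and> p \<noteq> 0 \<and> r ** p = p"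
  have "?P r"
    using assms by (simp add: is_projection_def)
  then obtain p where p: "?P p"
    and least: "\<And>q. ?P q \<Longrightarrow> vec.dim (proj_range p) \<le> vec.dim (proj_range q)"
    using ex_has_least_nat[of ?P r "\<lambda>p. vec.dim (proj_range p)"] by blast
  have "q = p" if q: "q \<in> A" "is_projection q" "q \<noteq> 0" and below: "p ** q = q" for q
  proof (rule ccontr)
    assume "q \<noteq> p"
    have "r ** q = (r ** p) ** q"
      using below by (simp flip: matrix_mul_assoc)
    then have "r ** q = q"
      using p below by simp
    then have "vec.dim (proj_range p) \<le> vec.dim (proj_range q)"
      using least q by blast
    moreover have "vec.dim (proj_range q) < vec.dim (proj_range p)"
      using dim_proj_range_less[of p q] p q below \<open>q \<noteq> p\<close> by blast
    ultimately show False
      by simp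
  qed
  then show ?thesis
    using p by (auto simp: minimal_projection_def)
qed

context
  fixes A :: "(complex^'n::finite^'n) set"
  assumes vn: "von_neumann_algebra A"
begin

lemma vn_bicommutant: "commutant (commutant A) = A"
  using vn by (simp add: von_neumann_algebra_def)

lemma vn_cadj: "a \<in> A \<Longrightarrow> cadj a \<in> A"
  using vn by (simp add: von_neumann_algebra_def)

lemma vn_mat: "mat c \<in> A"
  by (metis vn_bicommutant mat_in_commutant)

lemma vn_mult: "a \<in> A \<Longrightarrow> b \<in> A \<Longrightarrow> a ** b \<in> A"
  by (metis vn_bicommutant commutant_mult)

lemma vn_add: "a \<in> A \<Longrightarrow> b \<in> A \<Longrightarrow> a + b \<in> A"
  by (metis vn_bicommutant commutant_add)

lemma vn_diff: "a \<in> A \<Longrightarrow> b \<in> A \<Longrightarrow> a - b \<in> A"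
  by (metis vn_bicommutant commutant_diff)

lemma vn_commutant_cadj: "b \<in> commutant A \<Longrightarrow> cadj b \<in> commutant A"
  using commutant_cadj vn_cadj by blast

lemma projection_in_vn:
  assumes S: "vec.subspace S" and inv: "\<forall>T\<in>commutant A. \<forall>v\<in>S. T *v v \<in> S"
  shows "\<exists>P\<in>A. is_projection P \<and> proj_range P = S"
proof -
  obtain P where P: "is_projection P" and range: "proj_range P = S"
    using projection_onto_subspace[OF S] by blast
  have "T ** P = P ** T" if "T \<in> commutant A" for T
    using projection_commute_invariant[OF P] inv vn_commutant_cadj that range by simp
  then have "P \<in> commutant (commutant A)"
    by (simp add: commutant_def)
  then show ?thesis
    using P range vn_bicommutant by auto
qed

lemma hermitian_corner_scalar:
  assumes p: "minimal_projection A p" and hA: "h \<in> A" and herm: "cadj h = h"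
    and corner: "p ** h ** p = h"
  shows "\<exists>c. h = mat c ** p"
proof -
  have pA: "p \<in> A" and pp: "p ** p = p" and p0: "p \<noteq> 0"
    using p by (auto simp: minimal_projection_def is_projection_def)
  have ph: "p ** h = h"
    by (metis corner matrix_mul_assoc pp)
  have hp: "h ** p = h"
    by (metis corner matrix_mul_assoc pp)
  have inv: "\<forall>v\<in>proj_range p. h *v v \<in> proj_range p"
    by (simp add: proj_range_def matrix_vector_mul_assoc ph)
  obtain x where "p *v x \<noteq> 0"
    using matrix_nonzero_on_vector[OF p0] by blast
  then have "proj_range p \<noteq> {0}"
    using proj_range_image[OF pp] by blast
  then obtain w \<mu> where w: "w \<in> proj_range p" and "cinner w w = 1"
    and hw: "h *v w = complex_of_real \<mu> *s w"
    using hermitian_eigvec_exists[OF subspace_proj_range _ herm inv] by blast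
  define E where "E = {v. h *v v = complex_of_real \<mu> *s v \<and> p *v v = v}"
  have "vec.subspace E"
    by (auto simp: E_def vec.subspace_def matrix_vector_right_distrib vec.scale algebra_simps)
  moreover have "\<forall>T\<in>commutant A. \<forall>v\<in>E. T *v v \<in> E"
  proof (intro ballI)
    fix T v assume "T \<in> commutant A" "v \<in> E"
    then have hT: "h ** T = T ** h" and pT: "p ** T = T ** p"
      and hv: "h *v v = complex_of_real \<mu> *s v" and pv: "p *v v = v"
      using hA pA by (auto simp: commutant_def E_def)
    have "h *v (T *v v) = (T ** h) *v v"
      by (simp add: matrix_vector_mul_assoc hT)
    also have "\<dots> = complex_of_real \<mu> *s (T *v v)"
      by (simp add: hv vec.scale flip: matrix_vector_mul_assoc)
    finally have "h *v (T *v v) = complex_of_real \<mu> *s (T *v v)" .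
    moreover have "p *v (T *v v) = (T ** p) *v v"
      by (simp add: matrix_vector_mul_assoc pT)
    ultimately show "T *v v \<in> E"
      by (simp add: E_def pv flip: matrix_vector_mul_assoc)
  qed
  ultimately obtain P where PA: "P \<in> A" and P: "is_projection P" and range: "proj_range P = E"
    using projection_in_vn by blast
  have PE: "P *v v \<in> E" for v
    using proj_range_image P range by (auto simp: is_projection_def)
  then have "p *v (P *v v) = P *v v" for v
    by (simp add: E_def)
  then have "p ** P = P"
    by (simp add: matrix_eq flip: matrix_vector_mul_assoc)
  moreover have "P \<noteq> 0"
  proof
    assume "P = 0"
    moreover have "w \<in> proj_range P"
      using w hw range by (simp add: E_def proj_range_def)
    ultimately show False
      using \<open>cinner w w = 1\<close> by (simp add: proj_range_def)
  qed
  ultimately have "P = p"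
    using p PA P unfolding minimal_projection_def by blast
  have "h *v v = complex_of_real \<mu> *s (p *v v)" for v
  proof -
    have "h *v (p *v v) = complex_of_real \<mu> *s (p *v v)"
      using PE[of v] \<open>P = p\<close> by (simp add: E_def)
    then show ?thesis
      by (simp add: matrix_vector_mul_assoc hp)
  qed
  then have "h *v v = (mat (complex_of_real \<mu>) ** p) *v v" for v
    by (simp flip: matrix_vector_mul_assoc)
  then show ?thesis
    using matrix_eq by blast
qed


lemma corner_scalar:
  assumes p: "minimal_projection A p" and xA: "x \<in> A"
  shows "\<exists>c. p ** x ** p = mat c ** p"
proof -
  have pA: "p \<in> A" and padj: "cadj p = p" and pp: "p ** p = p"
    using p by (auto simp: minimal_projection_def is_projection_def)
  define y where "y = p ** x ** p"
  have yA: "y \<in> A"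
    using pA xA by (simp add: y_def vn_mult)
  have y_corner: "p ** y ** p = y"
    by (simp add: y_def matrix_mul_assoc pp matrix_mul_idem_right)
  have y_adj_corner: "p ** cadj y ** p = cadj y"
    using arg_cong[OF y_corner, of cadj] by (simp add: cadj_mult padj matrix_mul_assoc)
  define re where "re = mat (1 / 2) ** (y + cadj y)"
  define im where "im = mat (- \<i> / 2) ** (y - cadj y)"
  have "re \<in> A" "im \<in> A"
    using yA by (simp_all add: re_def im_def vn_mult vn_mat vn_add vn_diff vn_cadj)
  moreover have "cadj re = re" "cadj im = im"
    by (simp_all add: re_def im_def vec_eq_iff cadj_def algebra_simps)
  moreover have "p ** re ** p = re" "p ** im ** p = im"
    by (simp_all add: re_def im_def compress_mat_mult matrix_add_ldistrib matrix_add_rdistrib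
        matrix_diff_ldistrib matrix_diff_rdistrib y_corner y_adj_corner)
  ultimately obtain a b where a: "re = mat a ** p" and b: "im = mat b ** p"
    using hermitian_corner_scalar[OF p] by metis
  have "y = re + mat \<i> ** im"
    by (simp add: re_def im_def vec_eq_iff cadj_def field_simps)
  also have "\<dots> = mat (a + \<i> * b) ** p"
    by (simp add: a b matrix_mul_assoc mat_mult_mat matrix_add_rdistrib flip: mat_add_mat)
  finally show ?thesis
    unfolding y_def by blast
qed

lemma corner_positive_scalar:
  assumes p: "minimal_projection A p" and zA: "z \<in> A" and zp: "z ** p = z" and "z \<noteq> 0"
  shows "\<exists>r>0. cadj z ** z = mat (complex_of_real r) ** p"
proof -
  have pA: "p \<in> A" and padj: "cadj p = p" and pp: "p ** p = p" and "p \<noteq> 0"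
    using p by (auto simp: minimal_projection_def is_projection_def)
  have pz: "p ** cadj z = cadj z"
    using arg_cong[OF zp, of cadj] by (simp add: cadj_mult padj)
  have "p ** (cadj z ** z) ** p = (p ** cadj z) ** (z ** p)"
    by (simp add: matrix_mul_assoc)
  then have "p ** (cadj z ** z) ** p = cadj z ** z"
    by (simp add: pz zp)
  moreover obtain c where "p ** (cadj z ** z) ** p = mat c ** p"
    using corner_scalar[OF p vn_mult[OF vn_cadj[OF zA] zA]] by blast
  ultimately have zz: "cadj z ** z = mat c ** p"
    by simp
  obtain w where "p *v w \<noteq> 0"
    using matrix_nonzero_on_vector[OF \<open>p \<noteq> 0\<close>] by blast
  define u where "u = p *v w"
  have "u \<noteq> 0" "p *v u = u"
    using \<open>p *v w \<noteq> 0\<close> by (simp_all add: u_def matrix_vector_mul_assoc pp)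
  have "cinner (z *v u) (z *v u) = cinner u ((cadj z ** z) *v u)"
    by (simp add: cinner_adj_left matrix_vector_mul_assoc)
  also have "\<dots> = c * cinner u u"
    by (simp add: zz \<open>p *v u = u\<close> cinner_scale_right flip: matrix_vector_mul_assoc)
  finally have "c = complex_of_real ((norm (z *v u))\<^sup>2 / (norm u)\<^sup>2)"
    using \<open>u \<noteq> 0\<close> by (simp add: cinner_self field_simps)
  moreover have "c \<noteq> 0"
    using zz \<open>z \<noteq> 0\<close> cadj_mult_self_eq_0[of z] by auto
  ultimately show ?thesis
    using zz by (intro exI[of _ "(norm (z *v u))\<^sup>2 / (norm u)\<^sup>2"]) auto
qed

lemma projection_sum_minimal:
  assumes "r \<in> A" "is_projection r"
  shows "\<exists>Q. finite Q \<and> (\<forall>q\<in>Q. minimal_projection A q)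
           \<and> (\<forall>q\<in>Q. \<forall>q'\<in>Q. q \<noteq> q' \<longrightarrow> q ** q' = 0) \<and> (\<Sum>q\<in>Q. q) = r"
  using assms
proof (induction "vec.dim (proj_range r)" arbitrary: r rule: less_induct)
  case less
  show ?case
  proof (cases "r = 0")
    case True
    then show ?thesis
      by (intro exI[of _ "{}"]) simp
  next
    case False
    obtain p where p: "minimal_projection A p" and rp: "r ** p = p"
      using minimal_projection_below[OF less.prems False] by blast
    have pA: "p \<in> A" and padj: "cadj p = p" and pp: "p ** p = p" and "p \<noteq> 0"
      using p by (auto simp: minimal_projection_def is_projection_def)
    have radj: "cadj r = r" and rr: "r ** r = r"
      using less.prems by (auto simp: is_projection_def)
    have pr: "p ** r = p"
      using rp by (metis cadj_mult padj radj)
    define r' where "r' = r - p"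
    have "r' \<in> A"
      using less.prems pA by (simp add: r'_def vn_diff)
    moreover have r'_proj: "is_projection r'"
      by (simp add: is_projection_def r'_def cadj_diff radj padj matrix_diff_ldistrib
          matrix_diff_rdistrib rr rp pr pp)
    moreover have rr': "r ** r' = r'"
      by (simp add: r'_def matrix_diff_ldistrib rr rp)
    moreover have "r' \<noteq> r"
      using \<open>p \<noteq> 0\<close> by (simp add: r'_def)
    ultimately obtain Q' where fin: "finite Q'" and min: "\<forall>q\<in>Q'. minimal_projection A q"
      and orth: "\<forall>q\<in>Q'. \<forall>q'\<in>Q'. q \<noteq> q' \<longrightarrow> q ** q' = 0" and sum: "(\<Sum>q\<in>Q'. q) = r'"
      using less.hyps[OF dim_proj_range_less[OF less.prems(2) r'_proj rr']] by blast
    have qq: "q ** q = q" if "q \<in> Q'" for q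
      using min that by (simp add: minimal_projection_def is_projection_def)
    have pq: "p ** q = 0" and qp: "q ** p = 0" if "q \<in> Q'" for q
    proof -
      have "r' ** q = (\<Sum>q'\<in>Q'. q' ** q)"
        by (simp add: matrix_mult_sum_left flip: sum)
      also have "\<dots> = (\<Sum>q'\<in>Q'. if q' = q then q else 0)"
        using orth qq that by (intro sum.cong) auto
      also have "\<dots> = q"
        using fin that by simp
      finally have "r' ** q = q" .
      then have "p ** q = (p ** r') ** q"
        by (simp flip: matrix_mul_assoc)
      moreover have "p ** r' = 0"
        by (simp add: r'_def matrix_diff_ldistrib pr pp)
      ultimately show pq: "p ** q = 0"
        by simp
      have "cadj q = q"
        using min that by (simp add: minimal_projection_def is_projection_def)
      then have "q ** p = cadj (p ** q)"
        by (simp add: cadj_mult padj)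
      then show "q ** p = 0"
        by (simp add: pq)
    qed
    have "p \<notin> Q'"
      using pq pp \<open>p \<noteq> 0\<close> by force
    have "(\<Sum>q\<in>insert p Q'. q) = r"
      using fin \<open>p \<notin> Q'\<close> by (simp add: sum r'_def)
    then show ?thesis
      using fin min orth p pq qp by (intro exI[of _ "insert p Q'"]) auto
  qed
qed

end

lemma factor_imp_vn: "factor A \<Longrightarrow> von_neumann_algebra A"
  by (simp add: factor_def)

lemma factor_central_projection:
  assumes "factor A" "is_projection P" "P \<in> A" "P \<in> commutant A"
  shows "P = 0 \<or> P = mat 1"
proof -
  obtain c where P: "P = mat c"
    using assms by (auto simp: factor_def)
  then have "mat (c * c) = (mat c :: complex^'n^'n)"
    using assms(2) by (simp add: is_projection_def mat_mult_mat)
  then have "c = 0 \<or> c = 1"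
    by simp
  then show ?thesis
    using P by auto
qed

lemma factor_compression_nonzero:
  assumes fac: "factor A" and pA: "p \<in> A" and qA: "q \<in> A" and "p \<noteq> 0" "q \<noteq> 0"
  shows "\<exists>x\<in>A. p ** x ** q \<noteq> 0"
proof (rule ccontr)
  assume "\<not> ?thesis"
  then have pxq: "p ** x ** q = 0" if "x \<in> A" for x
    using that by blast
  have vn: "von_neumann_algebra A"
    using fac by (rule factor_imp_vn)
  \<comment> \<open>\<open>N\<close> is invariant under \<open>A\<close> and \<open>A'\<close>, so its projection is central.\<close>
  define N where "N = {u. \<forall>a\<in>A. p *v (a *v u) = 0}"
  have N: "vec.subspace N"
    by (auto simp: N_def vec.subspace_def matrix_vector_right_distrib vec.scale)
  have invA: "a *v v \<in> N" if "a \<in> A" "v \<in> N" for a v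
  proof -
    have "p *v (b *v (a *v v)) = 0" if "b \<in> A" for b
    proof -
      have "p *v ((b ** a) *v v) = 0"
        using \<open>a \<in> A\<close> \<open>b \<in> A\<close> \<open>v \<in> N\<close> vn_mult[OF vn] by (simp add: N_def)
      then show ?thesis
        by (simp add: matrix_vector_mul_assoc)
    qed
    then show ?thesis
      by (simp add: N_def)
  qed
  have "T *v v \<in> N" if T: "T \<in> commutant A" and v: "v \<in> N" for T v
  proof -
    have "p *v (a *v (T *v v)) = T *v (p *v (a *v v))" if "a \<in> A" for a
    proof -
      have aT: "a ** T = T ** a" and pT: "p ** T = T ** p"
        using T that pA by (auto simp: commutant_def)
      have "p ** a ** T = p ** (T ** a)"
        by (simp add: aT flip: matrix_mul_assoc)
      also have "\<dots> = T ** p ** a"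
        by (simp add: matrix_mul_assoc pT)
      finally show ?thesis
        by (simp add: matrix_vector_mul_assoc matrix_mul_assoc)
    qed
    then show ?thesis
      using v by (simp add: N_def)
  qed
  then obtain P where PA: "P \<in> A" and P: "is_projection P" and range: "proj_range P = N"
    using projection_in_vn[OF vn N] by blast
  have "a ** P = P ** a" if "a \<in> A" for a
    using projection_commute_invariant[OF P] invA vn_cadj[OF vn] that range by simp
  then have "P \<in> commutant A"
    by (simp add: commutant_def)
  then have "P = 0 \<or> P = mat 1"
    using factor_central_projection[OF fac P PA] by blast
  moreover have "q *v v \<in> N" for v
    using pxq by (simp add: N_def matrix_vector_mul_assoc)
  moreover obtain v where "q *v v \<noteq> 0"
    using matrix_nonzero_on_vector[OF \<open>q \<noteq> 0\<close>] by blast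
  ultimately have "N = UNIV"
    using range by (auto simp: proj_range_def)
  then have "p *v (mat 1 *v v) = 0" for v
    using vn_mat[OF vn, of 1] unfolding N_def by blast
  then have "p *v v = 0" for v
    by simp
  then show False
    using \<open>p \<noteq> 0\<close> by (simp add: matrix_eq)
qed

lemma minimal_projections_equivalent:
  assumes fac: "factor A" and p: "minimal_projection A p" and q: "minimal_projection A q"
  shows "\<exists>v\<in>A. cadj v ** v = p \<and> v ** cadj v = q"
proof -
  have vn: "von_neumann_algebra A"
    using fac by (rule factor_imp_vn)
  have pA: "p \<in> A" and pp: "p ** p = p" and "p \<noteq> 0"
    using p by (auto simp: minimal_projection_def is_projection_def)
  have qA: "q \<in> A" and qq: "q ** q = q" and "q \<noteq> 0"
    using q by (auto simp: minimal_projection_def is_projection_def)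
  obtain x where xA: "x \<in> A" and "q ** x ** p \<noteq> 0"
    using factor_compression_nonzero[OF fac qA pA \<open>q \<noteq> 0\<close> \<open>p \<noteq> 0\<close>] by blast
  define z where "z = q ** x ** p"
  have zA: "z \<in> A"
    using xA pA qA by (simp add: z_def vn_mult[OF vn])
  have zp: "z ** p = z"
    by (simp add: z_def matrix_mul_idem_right pp)
  have qz: "q ** z = z"
    by (simp add: z_def matrix_mul_assoc qq)
  have "z \<noteq> 0"
    using \<open>q ** x ** p \<noteq> 0\<close> by (simp add: z_def)
  then obtain r where "r > 0" and zz: "cadj z ** z = mat (complex_of_real r) ** p"
    using corner_positive_scalar[OF vn p zA zp] by blast
  define s where "s = complex_of_real (1 / sqrt r)"
  define v where "v = mat s ** z"
  have vA: "v \<in> A"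
    using zA by (simp add: v_def vn_mult[OF vn] vn_mat[OF vn])
  have "cadj v ** v = mat s ** (cadj z ** mat s) ** z"
    by (simp add: v_def s_def cadj_mat_mult matrix_mul_assoc)
  also have "\<dots> = (mat s ** mat s) ** (cadj z ** z)"
    by (simp add: mat_mult_commute[of s "cadj z", symmetric] matrix_mul_assoc)
  also have "\<dots> = mat (s * s * complex_of_real r) ** p"
    by (simp add: zz mat_mult_mat matrix_mul_assoc)
  finally have vv: "cadj v ** v = p"
    using \<open>r > 0\<close> by (simp add: s_def field_simps flip: of_real_mult)
  have vp: "v ** p = v"
    by (simp add: v_def zp flip: matrix_mul_assoc)
  have "q ** v = (q ** mat s) ** z"
    by (simp add: v_def matrix_mul_assoc)
  also have "\<dots> = mat s ** (q ** z)"
    by (simp add: mat_mult_commute matrix_mul_assoc)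
  also have "\<dots> = v"
    by (simp add: qz v_def)
  finally have qv: "q ** v = v" .
  define e where "e = v ** cadj v"
  have "e ** e = v ** (cadj v ** v) ** cadj v"
    by (simp add: e_def matrix_mul_assoc)
  then have "is_projection e"
    by (simp add: is_projection_def e_def cadj_mult vv vp)
  moreover have "e \<in> A"
    using vA by (simp add: e_def vn_mult[OF vn] vn_cadj[OF vn])
  moreover have "e \<noteq> 0"
    using vv \<open>p \<noteq> 0\<close> cadj_mult_self_eq_0[of "cadj v"] by (auto simp: e_def)
  moreover have "q ** e = e"
    by (simp add: e_def matrix_mul_assoc qv)
  ultimately have "e = q"
    using q by (auto simp: minimal_projection_def)
  then show ?thesis
    using vA vv e_def by blast
qed

section \<open>Matrix units of a factor\<close>

lemma partial_isometry_right:
  assumes VV: "cadj V ** V = p" and pp: "p ** p = p"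
  shows "V ** p = V"
proof -
  have padj: "cadj p = p"
    using VV by (metis cadj_cadj cadj_mult)
  have VVX: "X ** cadj V ** V = X ** p" for X
    by (simp add: VV flip: matrix_mul_assoc)
  have "cadj (V - V ** p) ** (V - V ** p) = 0"
    by (simp add: cadj_diff cadj_mult padj matrix_diff_ldistrib matrix_diff_rdistrib
        matrix_mul_assoc VV VVX pp matrix_mul_idem_right)
  then show ?thesis
    by (simp add: cadj_mult_self_eq_0)
qed

(* The minimal projections V q ** cadj (V q), q in Q, sum to the identity and are all equivalent
   to q0; with an orthonormal basis K of the range of q0 this identifies H with C^Q (x) C^K. *)
locale factor_matrix_units =
  fixes A :: "(complex^'n::finite^'n) set" and Q :: "'q set" and q0 :: "complex^'n^'n"
    and V :: "'q \<Rightarrow> complex^'n^'n" and K :: "(complex^'n) set"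
  assumes vn: "von_neumann_algebra A"
    and finite_Q: "finite Q" and minimal: "minimal_projection A q0"
    and V_in: "\<And>q. q \<in> Q \<Longrightarrow> V q \<in> A"
    and V_orth: "\<And>q q'. q \<in> Q \<Longrightarrow> q' \<in> Q \<Longrightarrow> cadj (V q) ** V q' = (if q = q' then q0 else 0)"
    and V_complete: "(\<Sum>q\<in>Q. V q ** cadj (V q)) = mat 1"
    and finite_K: "finite K" and K_range: "K \<subseteq> proj_range q0"
    and K_orthonormal: "orthonormal_on K id"
    and K_span: "\<And>v. v \<in> proj_range q0 \<Longrightarrow> v = (\<Sum>k\<in>K. cinner k v *s k)"
begin

definition e :: "'q \<Rightarrow> complex^'n \<Rightarrow> complex^'n" where
  "e q k = V q *v k"

definition E :: "'q \<Rightarrow> 'q \<Rightarrow> complex^'n^'n" where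
  "E q q' = V q ** cadj (V q')"

definition F :: "complex^'n \<Rightarrow> complex^'n \<Rightarrow> complex^'n^'n" where
  "F k k' = (\<Sum>q\<in>Q. outer (e q k) (e q k'))"

lemma q0_idem: "q0 ** q0 = q0"
  using minimal by (simp add: minimal_projection_def is_projection_def)

lemma V_q0:
  assumes "q \<in> Q"
  shows "V q ** q0 = V q"
  using partial_isometry_right[OF _ q0_idem] V_orth[OF assms assms] by simp

lemma q0_cadj_V: "q \<in> Q \<Longrightarrow> q0 ** cadj (V q) = cadj (V q)"
  using arg_cong[OF V_q0, of q cadj] minimal
  by (simp add: cadj_mult minimal_projection_def is_projection_def)

lemma q0_K: "k \<in> K \<Longrightarrow> q0 *v k = k"
  using K_range by (auto simp: proj_range_def)

lemma cinner_e: 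
  assumes "q \<in> Q" "q' \<in> Q" "k \<in> K" "k' \<in> K"
  shows "cinner (e q k) (e q' k') = (if q = q' \<and> k = k' then 1 else 0)"
proof -
  have "cinner (e q k) (e q' k') = cinner k ((cadj (V q) ** V q') *v k')"
    by (simp add: e_def cinner_adj_left matrix_vector_mul_assoc)
  also have "\<dots> = (if q = q' then cinner k k' else 0)"
    using assms V_orth q0_K by simp
  finally show ?thesis
    using K_orthonormal assms by (simp add: orthonormal_on_def)
qed

lemma e_orthonormal: "orthonormal_on (Q \<times> K) (\<lambda>p. e (fst p) (snd p))"
  using cinner_e by (auto simp: orthonormal_on_def prod_eq_iff)

lemma e_expansion: "w = (\<Sum>p\<in>Q \<times> K. cinner (e (fst p) (snd p)) w *s e (fst p) (snd p))"
proof -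
  have "w = (\<Sum>q\<in>Q. V q *v (cadj (V q) *v w))"
    using arg_cong[OF V_complete, of "\<lambda>M. M *v w"]
    by (simp add: matrix_vector_mult_sum_left matrix_vector_mul_assoc)
  also have "\<dots> = (\<Sum>q\<in>Q. \<Sum>k\<in>K. cinner (e q k) w *s e q k)"
  proof (rule sum.cong[OF refl])
    fix q assume "q \<in> Q"
    then have "cadj (V q) *v w \<in> proj_range q0"
      by (simp add: proj_range_def matrix_vector_mul_assoc q0_cadj_V)
    then have "V q *v (cadj (V q) *v w) = V q *v (\<Sum>k\<in>K. cinner k (cadj (V q) *v w) *s k)"
      using K_span by metis
    then show "V q *v (cadj (V q) *v w) = (\<Sum>k\<in>K. cinner (e q k) w *s e q k)"
      by (simp add: vec.sum vec.scale e_def cinner_adj_left)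
  qed
  also have "\<dots> = (\<Sum>p\<in>Q \<times> K. cinner (e (fst p) (snd p)) w *s e (fst p) (snd p))"
    by (simp add: sum.cartesian_product case_prod_beta')
  finally show ?thesis .
qed

lemma matrix_eq_on_e:
  assumes "\<And>q k. q \<in> Q \<Longrightarrow> k \<in> K \<Longrightarrow> M *v e q k = N *v e q k"
  shows "M = N"
proof -
  have "M *v w = N *v w" for w
    using assms by (subst (1 2) e_expansion[of w]) (auto simp: vec.sum vec.scale intro!: sum.cong)
  then show ?thesis
    by (simp add: matrix_eq)
qed

lemma A_acts_on_first_index:
  assumes "a \<in> A"
  shows "\<exists>\<gamma>. \<forall>q'\<in>Q. \<forall>k\<in>K. a *v e q' k = (\<Sum>q\<in>Q. \<gamma> q q' *s e q k)"
proof -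
  have "\<exists>c. cadj (V q) ** a ** V q' = mat c ** q0" if "q \<in> Q" "q' \<in> Q" for q q'
  proof -
    have "cadj (V q) ** a ** V q' \<in> A"
      using assms that V_in by (simp add: vn_mult[OF vn] vn_cadj[OF vn])
    then obtain c where "q0 ** (cadj (V q) ** a ** V q') ** q0 = mat c ** q0"
      using corner_scalar[OF vn minimal] by blast
    moreover have "q0 ** (cadj (V q) ** a ** V q') ** q0 = (q0 ** cadj (V q)) ** a ** (V q' ** q0)"
      by (simp add: matrix_mul_assoc)
    ultimately have "cadj (V q) ** a ** V q' = mat c ** q0"
      using that by (simp add: q0_cadj_V V_q0)
    then show ?thesis
      by blast
  qed
  then obtain \<gamma> where \<gamma>: "\<And>q q'. q \<in> Q \<Longrightarrow> q' \<in> Q \<Longrightarrow> cadj (V q) ** a ** V q' = mat (\<gamma> q q') ** q0"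
    by metis
  have "a *v e q' k = (\<Sum>q\<in>Q. \<gamma> q q' *s e q k)" if "q' \<in> Q" "k \<in> K" for q' k
  proof -
    have "a *v e q' k = (\<Sum>q\<in>Q. V q ** cadj (V q)) *v (a *v e q' k)"
      by (simp add: V_complete)
    also have "\<dots> = (\<Sum>q\<in>Q. V q *v ((cadj (V q) ** a ** V q') *v k))"
      by (simp add: e_def matrix_vector_mult_sum_left matrix_mult_sum_left matrix_vector_mul_assoc
          matrix_mul_assoc)
    also have "\<dots> = (\<Sum>q\<in>Q. \<gamma> q q' *s e q k)"
      using that \<gamma> q0_K by (simp add: e_def vec.scale flip: matrix_vector_mul_assoc)
    finally show ?thesis .
  qed
  then show ?thesis
    by blast
qed

lemma E_in: "q \<in> Q \<Longrightarrow> q' \<in> Q \<Longrightarrow> E q q' \<in> A"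
  by (simp add: E_def V_in vn_mult[OF vn] vn_cadj[OF vn])

lemma cadj_E: "cadj (E q q') = E q' q"
  by (simp add: E_def cadj_mult)

lemma E_e:
  assumes "q' \<in> Q" "q'' \<in> Q" "k \<in> K"
  shows "E q q' *v e q'' k = (if q' = q'' then e q k else 0)"
proof -
  have "E q q' *v e q'' k = V q *v ((cadj (V q') ** V q'') *v k)"
    by (simp add: E_def e_def matrix_vector_mul_assoc matrix_mul_assoc)
  then show ?thesis
    using V_orth[OF assms(1,2)] q0_K[OF assms(3)] by (simp add: e_def)
qed

lemma F_e: "k \<in> K \<Longrightarrow> k' \<in> K \<Longrightarrow> q \<in> Q \<Longrightarrow> k'' \<in> K \<Longrightarrow> F k k' *v e q k'' = (if k' = k'' then e q k else 0)"
proof -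
  assume "k \<in> K" "k' \<in> K" "q \<in> Q" "k'' \<in> K"
  then have "F k k' *v e q k'' = (\<Sum>q'\<in>Q. if q' = q then (if k' = k'' then e q k else 0) else 0)"
    unfolding F_def matrix_vector_mult_sum_left outer_mult_vector
    by (intro sum.cong) (auto simp: cinner_e)
  then show ?thesis
    using finite_Q \<open>q \<in> Q\<close> by simp
qed

lemma cadj_F: "cadj (F k k') = F k' k"
  by (simp add: F_def cadj_sum cadj_outer)

lemma F_in_commutant: 
  assumes "k \<in> K" "k' \<in> K"
  shows "F k k' \<in> commutant A"
proof -
  have "a ** F k k' = F k k' ** a" if aA: "a \<in> A" for a
  proof (rule matrix_eq_on_e)
    obtain \<gamma> where \<gamma>: "\<forall>q'\<in>Q. \<forall>k\<in>K. a *v e q' k = (\<Sum>q\<in>Q. \<gamma> q q' *s e q k)"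
      using A_acts_on_first_index[OF aA] by blast
    fix q'' k'' assume "q'' \<in> Q" "k'' \<in> K"
    then have "(a ** F k k') *v e q'' k'' = (if k' = k'' then (\<Sum>q\<in>Q. \<gamma> q q'' *s e q k) else 0)"
      using assms \<gamma> by (simp add: F_e flip: matrix_vector_mul_assoc)
    also have "\<dots> = (\<Sum>q\<in>Q. \<gamma> q q'' *s (F k k' *v e q k''))"
      using assms \<open>k'' \<in> K\<close> by (simp add: F_e)
    also have "\<dots> = (F k k' ** a) *v e q'' k''"
      using \<gamma> \<open>q'' \<in> Q\<close> \<open>k'' \<in> K\<close> by (simp add: vec.sum vec.scale flip: matrix_vector_mul_assoc)
    finally show "(a ** F k k') *v e q'' k'' = (F k k' ** a) *v e q'' k''" .
  qed
  then show ?thesis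
    by (simp add: commutant_def)
qed

end

lemma factor_matrix_units_exist:
  fixes A :: "(complex^'n::finite^'n) set"
  assumes fac: "factor A"
  shows "\<exists>(Q :: (complex^'n^'n) set) q0 V K. q0 \<in> Q \<and> K \<noteq> {} \<and> factor_matrix_units A Q q0 V K"
proof -
  have vn: "von_neumann_algebra A"
    using fac by (rule factor_imp_vn)
  obtain Q where fin: "finite Q" and min: "\<forall>q\<in>Q. minimal_projection A q"
    and orth: "\<forall>q\<in>Q. \<forall>q'\<in>Q. q \<noteq> q' \<longrightarrow> q ** q' = 0" and sum: "(\<Sum>q\<in>Q. q) = mat 1"
    using projection_sum_minimal[OF vn vn_mat[OF vn], of 1] by (auto simp: is_projection_def)
  have qadj: "cadj q = q" and qq: "q ** q = q" if "q \<in> Q" for q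
    using min that by (simp_all add: minimal_projection_def is_projection_def)
  have "Q \<noteq> {}"
  proof
    assume "Q = {}"
    then have "mat 1 = (mat 0 :: complex^'n^'n)"
      using sum by simp
    then show False
      by (simp only: mat_eq_mat_iff) simp
  qed
  then obtain q0 where "q0 \<in> Q"
    by blast
  then have q0: "minimal_projection A q0"
    using min by blast
  have "\<exists>v. v \<in> A \<and> cadj v ** v = q0 \<and> v ** cadj v = q" if "q \<in> Q" for q
  proof -
    have "minimal_projection A q"
      using min that by blast
    then show ?thesis
      using minimal_projections_equivalent[OF fac q0] by blast
  qed
  then have "\<forall>q\<in>Q. \<exists>v. v \<in> A \<and> cadj v ** v = q0 \<and> v ** cadj v = q"
    by blast
  from bchoice[OF this] obtain V
    where V: "\<forall>q\<in>Q. V q \<in> A \<and> cadj (V q) ** V q = q0 \<and> V q ** cadj (V q) = q"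
    by blast
  have qV: "q ** V q = V q" if "q \<in> Q" for q
  proof -
    have VV: "cadj (V q) ** V q = q0" and VVa: "V q ** cadj (V q) = q"
      using V that by auto
    have "q ** V q = (V q ** cadj (V q)) ** V q"
      by (simp add: VVa)
    also have "\<dots> = V q ** q0"
      by (simp add: VV flip: matrix_mul_assoc)
    also have "\<dots> = V q"
      using partial_isometry_right[OF VV qq[OF \<open>q0 \<in> Q\<close>]] .
    finally show ?thesis .
  qed
  have V_orth: "cadj (V q) ** V q' = (if q = q' then q0 else 0)" if "q \<in> Q" "q' \<in> Q" for q q'
  proof (cases "q = q'")
    case False
    have "cadj (V q) ** V q' = cadj (q ** V q) ** (q' ** V q')"
      using that by (simp add: qV)
    also have "\<dots> = cadj (V q) ** (q ** q') ** V q'"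
      using that by (simp add: cadj_mult matrix_mul_assoc qadj)
    finally show ?thesis
      using orth that False by simp
  qed (use V that in simp)
  have zero_inv: "\<forall>v\<in>proj_range q0. (0 :: complex^'n^'n) *v v \<in> proj_range q0"
    by (simp add: proj_range_def)
  obtain K where "finite K" "K \<subseteq> proj_range q0" "orthonormal_on K id"
    and span: "\<forall>v\<in>proj_range q0. v = (\<Sum>k\<in>K. cinner k v *s k)"
    using hermitian_eigenbasis[OF subspace_proj_range cadj_zero zero_inv] by blast
  have "K \<noteq> {}"
  proof
    assume "K = {}"
    have "q0 \<noteq> 0"
      using q0 by (simp add: minimal_projection_def)
    then obtain v where "q0 *v v \<noteq> 0"
      using matrix_nonzero_on_vector by blast
    moreover have "q0 *v v = (\<Sum>k\<in>K. cinner k (q0 *v v) *s k)"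
      using span proj_range_image[OF qq[OF \<open>q0 \<in> Q\<close>]] by blast
    ultimately show False
      using \<open>K = {}\<close> by simp
  qed
  have "factor_matrix_units A Q q0 V K"
  proof
    show "(\<Sum>q\<in>Q. V q ** cadj (V q)) = mat 1"
      using sum V by simp
  qed (use vn fin q0 V V_orth \<open>finite K\<close> \<open>K \<subseteq> proj_range q0\<close> \<open>orthonormal_on K id\<close> span in auto)
  then show ?thesis
    using \<open>q0 \<in> Q\<close> \<open>K \<noteq> {}\<close> by blast
qed

section \<open>Tensor products and the Schmidt decomposition\<close>

lemma sum_UNIV_prod: "(\<Sum>p\<in>UNIV. f p) = (\<Sum>i\<in>UNIV. \<Sum>j\<in>UNIV. f (i, j))"
  by (simp add: sum.cartesian_product flip: UNIV_Times_UNIV)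

lemma tensor_op_mult_tensor_vec: "tensor_op A B *v tensor_vec a b = tensor_vec (A *v a) (B *v b)"
  by (simp add: tensor_op_def tensor_vec_def matrix_vector_mult_def vec_eq_iff sum_UNIV_prod
      sum_product mult_ac)

lemma tensor_op_mult: "tensor_op A B ** tensor_op C D = tensor_op (A ** C) (B ** D)"
  by (simp add: tensor_op_def matrix_matrix_mult_def vec_eq_iff sum_UNIV_prod sum_product mult_ac)

lemma cadj_tensor_op: "cadj (tensor_op A B) = tensor_op (cadj A) (cadj B)"
  by (simp add: tensor_op_def cadj_def vec_eq_iff)

lemma tensor_vec_scale_left: "tensor_vec (c *s a) b = c *s tensor_vec a b"
  by (simp add: tensor_vec_def vec_eq_iff mult_ac)

lemma tensor_vec_zero_left [simp]: "tensor_vec 0 b = 0"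
  by (simp add: tensor_vec_def vec_eq_iff)

lemma tensor_op_mult_sum:
  "tensor_op A B *v (\<Sum>m\<in>M. lam m *s tensor_vec (a m) (b m))
     = (\<Sum>m\<in>M. lam m *s tensor_vec (A *v a m) (B *v b m))"
  by (simp add: vec.sum vec.scale tensor_op_mult_tensor_vec)

definition contract_right :: "complex^('l::finite \<times> 'r::finite) \<Rightarrow> complex^'r \<Rightarrow> complex^'l" where
  "contract_right \<psi> \<beta> = (\<chi> i. \<Sum>j\<in>UNIV. \<psi> $ (i, j) * cnj (\<beta> $ j))"

definition contract_left :: "complex^('l::finite \<times> 'r::finite) \<Rightarrow> complex^'l \<Rightarrow> complex^'r" where
  "contract_left \<psi> \<alpha> = (\<chi> j. \<Sum>i\<in>UNIV. \<psi> $ (i, j) * cnj (\<alpha> $ i))"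

lemma contract_right_linear:
  "contract_right (\<Sum>m\<in>M. c m *s \<psi> m) \<beta> = (\<Sum>m\<in>M. c m *s contract_right (\<psi> m) \<beta>)"
  by (induct M rule: infinite_finite_induct)
    (auto simp: contract_right_def vec_eq_iff sum.distrib distrib_right sum_distrib_left mult.assoc)

lemma contract_left_linear:
  "contract_left (\<Sum>m\<in>M. c m *s \<psi> m) \<alpha> = (\<Sum>m\<in>M. c m *s contract_left (\<psi> m) \<alpha>)"
  by (induct M rule: infinite_finite_induct)
    (auto simp: contract_left_def vec_eq_iff sum.distrib distrib_right sum_distrib_left mult.assoc)

lemma contract_right_tensor_vec: "contract_right (tensor_vec a b) \<beta> = cinner \<beta> b *s a"
  by (simp add: contract_right_def tensor_vec_def cinner_def vec_eq_iff sum_distrib_left mult_ac)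

lemma contract_left_tensor_vec: "contract_left (tensor_vec a b) \<alpha> = cinner \<alpha> a *s b"
  by (simp add: contract_left_def tensor_vec_def cinner_def vec_eq_iff sum_distrib_left mult_ac)

lemma contract_right_sum:
  "contract_right (\<Sum>m\<in>M. lam m *s tensor_vec (a m) (b m)) \<beta> = (\<Sum>m\<in>M. (lam m * cinner \<beta> (b m)) *s a m)"
  by (simp add: contract_right_linear contract_right_tensor_vec vector_smult_assoc)

lemma contract_left_sum:
  "contract_left (\<Sum>m\<in>M. lam m *s tensor_vec (a m) (b m)) \<alpha> = (\<Sum>m\<in>M. (lam m * cinner \<alpha> (a m)) *s b m)"
  by (simp add: contract_left_linear contract_left_tensor_vec vector_smult_assoc)

lemma sum_orthonormal_delta:
  assumes "orthonormal_on M b" "finite M" "m \<in> M"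
  shows "(\<Sum>m'\<in>M. (c m' * cinner (b m) (b m')) *s (u m' :: complex^'n)) = c m *s u m"
proof -
  have "(\<Sum>m'\<in>M. (c m' * cinner (b m) (b m')) *s u m') = (\<Sum>m'\<in>M. if m = m' then c m' *s u m' else 0)"
    using assms(1,3) by (intro sum.cong) (auto simp: orthonormal_on_def)
  then show ?thesis
    using assms(2,3) by simp
qed

lemma contract_right_scale: "contract_right (c *s \<psi>) \<beta> = c *s contract_right \<psi> \<beta>"
  by (simp add: contract_right_def vec_eq_iff sum_distrib_left mult.assoc)

lemma contract_left_scale: "contract_left (c *s \<psi>) \<alpha> = c *s contract_left \<psi> \<alpha>"
  by (simp add: contract_left_def vec_eq_iff sum_distrib_left mult.assoc)

lemma tensor_eigvec_left:
  assumes M: "orthonormal_on M b" "finite M" "m \<in> M" and "lam m \<noteq> 0"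
    and \<psi>: "\<psi> = (\<Sum>m\<in>M. lam m *s tensor_vec (a m) (b m))"
    and eig: "tensor_op T (mat 1) *v \<psi> = c *s \<psi>"
  shows "T *v a m = c *s a m"
proof -
  have "lam m *s (T *v a m) = contract_right (tensor_op T (mat 1) *v \<psi>) (b m)"
    by (simp add: \<psi> tensor_op_mult_sum contract_right_sum sum_orthonormal_delta[OF M])
  also have "\<dots> = c *s (lam m *s a m)"
    by (simp only: eig contract_right_scale) (simp add: \<psi> contract_right_sum sum_orthonormal_delta[OF M])
  also have "\<dots> = lam m *s (c *s a m)"
    by (simp add: vector_smult_assoc mult.commute)
  finally show ?thesis
    using \<open>lam m \<noteq> 0\<close> by (metis vector_mul_lcancel)
qed

lemma tensor_eigvec_right:
  assumes M: "orthonormal_on M a" "finite M" "m \<in> M" and "lam m \<noteq> 0"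
    and \<psi>: "\<psi> = (\<Sum>m\<in>M. lam m *s tensor_vec (a m) (b m))"
    and eig: "tensor_op (mat 1) T *v \<psi> = c *s \<psi>"
  shows "T *v b m = c *s b m"
proof -
  have "lam m *s (T *v b m) = contract_left (tensor_op (mat 1) T *v \<psi>) (a m)"
    by (simp add: \<psi> tensor_op_mult_sum contract_left_sum sum_orthonormal_delta[OF M])
  also have "\<dots> = c *s (lam m *s b m)"
    by (simp only: eig contract_left_scale) (simp add: \<psi> contract_left_sum sum_orthonormal_delta[OF M])
  also have "\<dots> = lam m *s (c *s b m)"
    by (simp add: vector_smult_assoc mult.commute)
  finally show ?thesis
    using \<open>lam m \<noteq> 0\<close> by (metis vector_mul_lcancel)
qed

definition cnj_vec :: "complex^'n::finite \<Rightarrow> complex^'n" where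
  "cnj_vec v = (\<chi> i. cnj (v $ i))"

lemma cinner_cnj_vec: "cinner (cnj_vec x) (cnj_vec y) = cnj (cinner x y)"
  by (simp add: cnj_vec_def cinner_def mult.commute)

lemma orthonormal_basis_completeness:
  assumes span: "\<And>v. v = (\<Sum>d\<in>D. cinner d v *s d)"
  shows "(\<Sum>d\<in>D. d $ k * cnj (d $ j)) = (if j = k then 1 else 0)"
proof -
  have "cinner d (axis j 1) = cnj (d $ j)" for d
    by (simp add: cinner_def axis_def if_distrib if_distribR cong: if_cong)
  then have "axis j 1 $ k = (\<Sum>d\<in>D. d $ k * cnj (d $ j))"
    using arg_cong[OF span[of "axis j 1"], of "\<lambda>v. v $ k"] by (simp add: mult.commute)
  then show ?thesis
    by (cases "j = k") (simp_all add: axis_def)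
qed

lemma schmidt_decomposition:
  fixes \<psi> :: "complex^('l::finite \<times> 'r::finite)"
  obtains M :: "(complex^'r) set" and lam a b
  where "finite M" "\<forall>m\<in>M. lam m \<noteq> 0" "orthonormal_on M a" "orthonormal_on M b"
    "\<psi> = (\<Sum>m\<in>M. lam m *s tensor_vec (a m) (b m))"
proof -
  \<comment> \<open>Singular value decomposition of \<open>\<psi>\<close> read as a matrix \<open>C\<close>.\<close>
  define C :: "complex^'r^'l" where "C = (\<chi> i j. \<psi> $ (i, j))"
  have "\<forall>v\<in>UNIV. (cadj C ** C) *v v \<in> UNIV"
    by simp
  then obtain D where "finite D" and onD: "orthonormal_on D id"
    and span: "\<And>v. v = (\<Sum>d\<in>D. cinner d v *s d)"
    and eig: "\<forall>d\<in>D. \<exists>\<mu>::real. (cadj C ** C) *v d = complex_of_real \<mu> *s d"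
    using hermitian_eigenbasis[OF vec.subspace_UNIV, of "cadj C ** C"] by (auto simp: cadj_mult)
  have "\<psi> $ (i, j) = (\<Sum>d\<in>D. tensor_vec (C *v d) (cnj_vec d)) $ (i, j)" for i j
  proof -
    have "(\<Sum>d\<in>D. tensor_vec (C *v d) (cnj_vec d)) $ (i, j)
        = (\<Sum>k\<in>UNIV. \<psi> $ (i, k) * (\<Sum>d\<in>D. d $ k * cnj (d $ j)))"
      by (simp add: tensor_vec_def cnj_vec_def matrix_vector_mult_def C_def sum_distrib_left
          sum_distrib_right mult_ac sum.swap[of _ D])
    then show ?thesis
      by (simp add: orthonormal_basis_completeness[OF span] if_distrib if_distribR cong: if_cong)
  qed
  then have "\<psi> = (\<Sum>d\<in>D. tensor_vec (C *v d) (cnj_vec d))"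
    by (simp add: vec_eq_iff)
  define M where "M = {d\<in>D. C *v d \<noteq> 0}"
  define lam where "lam d = complex_of_real (norm (C *v d))" for d
  define a where "a d = complex_of_real (1 / norm (C *v d)) *s (C *v d)" for d
  have "\<psi> = (\<Sum>d\<in>M. tensor_vec (C *v d) (cnj_vec d))"
    unfolding \<open>\<psi> = _\<close> M_def using \<open>finite D\<close> by (intro sum.mono_neutral_right) auto
  also have "\<dots> = (\<Sum>d\<in>M. lam d *s tensor_vec (a d) (cnj_vec d))"
    by (intro sum.cong) (simp_all add: M_def lam_def a_def vector_smult_assoc
        flip: tensor_vec_scale_left)
  finally have "\<psi> = (\<Sum>d\<in>M. lam d *s tensor_vec (a d) (cnj_vec d))" .
  moreover have "orthonormal_on M a"
    unfolding orthonormal_on_def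
  proof (intro ballI)
    fix d d' assume "d \<in> M" "d' \<in> M"
    show "cinner (a d) (a d') = (if d = d' then 1 else 0)"
    proof (cases "d = d'")
      case True
      then show ?thesis
        using \<open>d \<in> M\<close> cinner_normalize[of "C *v d"] by (simp add: a_def M_def)
    next
      case False
      obtain \<mu> :: real where "(cadj C ** C) *v d' = complex_of_real \<mu> *s d'"
        using eig \<open>d' \<in> M\<close> by (auto simp: M_def)
      then have "cinner (C *v d) (C *v d') = complex_of_real \<mu> * cinner d d'"
        by (simp add: cinner_adj_left cinner_scale_right flip: matrix_vector_mul_assoc)
      also have "\<dots> = 0"
        using onD \<open>d \<in> M\<close> \<open>d' \<in> M\<close> False by (simp add: orthonormal_on_def M_def)
      finally show ?thesis
        using False by (simp add: a_def cinner_scale_left cinner_scale_right)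
    qed
  qed
  moreover have "orthonormal_on M cnj_vec"
    using onD by (auto simp: orthonormal_on_def cinner_cnj_vec M_def)
  moreover have "finite M" "\<forall>m\<in>M. lam m \<noteq> 0"
    using \<open>finite D\<close> by (simp_all add: M_def lam_def)
  ultimately show ?thesis
    using that by blast
qed

lemma schmidt_transport:
  fixes \<psi> :: "complex^('l::finite \<times> 'r::finite)"
    and S :: "'q \<Rightarrow> complex^'l^'l" and T :: "'k \<Rightarrow> complex^'r^'r"
  assumes S: "\<And>q q'. q \<in> Q \<Longrightarrow> q' \<in> Q \<Longrightarrow>
      tensor_op (cadj (S q) ** S q') (mat 1) *v \<psi> = (if q = q' then 1 else 0) *s \<psi>"
    and T: "\<And>k k'. k \<in> K \<Longrightarrow> k' \<in> K \<Longrightarrow>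
      tensor_op (mat 1) (cadj (T k) ** T k') *v \<psi> = (if k = k' then 1 else 0) *s \<psi>"
  shows "\<exists>(M :: (complex^'r) set) a b lam. finite M
    \<and> orthonormal_on (Q \<times> M) (\<lambda>p. S (fst p) *v a (snd p))
    \<and> orthonormal_on (K \<times> M) (\<lambda>p. T (fst p) *v b (snd p))
    \<and> (\<forall>q k. tensor_op (S q) (T k) *v \<psi> = (\<Sum>m\<in>M. lam m *s tensor_vec (S q *v a m) (T k *v b m)))"
proof -
  obtain M :: "(complex^'r) set" and lam a b where M: "finite M" and lam: "\<forall>m\<in>M. lam m \<noteq> 0"
    and a: "orthonormal_on M a" and b: "orthonormal_on M b"
    and \<psi>: "\<psi> = (\<Sum>m\<in>M. lam m *s tensor_vec (a m) (b m))"
    using schmidt_decomposition by blast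
  have "cinner (S q *v a m) (S q' *v a m') = (if q = q' \<and> m = m' then 1 else 0)"
    if "q \<in> Q" "q' \<in> Q" "m \<in> M" "m' \<in> M" for q q' m m'
  proof -
    have "cinner (S q *v a m) (S q' *v a m') = cinner (a m) ((cadj (S q) ** S q') *v a m')"
      by (simp add: cinner_adj_left matrix_vector_mul_assoc)
    also have "\<dots> = (if q = q' then 1 else 0) * cinner (a m) (a m')"
      using tensor_eigvec_left[OF b M \<open>m' \<in> M\<close> _ \<psi> S[OF that(1,2)]] lam that
      by (simp add: cinner_scale_right)
    finally show ?thesis
      using a that by (simp add: orthonormal_on_def)
  qed
  moreover have "cinner (T k *v b m) (T k' *v b m') = (if k = k' \<and> m = m' then 1 else 0)"
    if "k \<in> K" "k' \<in> K" "m \<in> M" "m' \<in> M" for k k' m m'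
  proof -
    have "cinner (T k *v b m) (T k' *v b m') = cinner (b m) ((cadj (T k) ** T k') *v b m')"
      by (simp add: cinner_adj_left matrix_vector_mul_assoc)
    also have "\<dots> = (if k = k' then 1 else 0) * cinner (b m) (b m')"
      using tensor_eigvec_right[OF a M \<open>m' \<in> M\<close> _ \<psi> T[OF that(1,2)]] lam that
      by (simp add: cinner_scale_right)
    finally show ?thesis
      using b that by (simp add: orthonormal_on_def)
  qed
  ultimately have "orthonormal_on (Q \<times> M) (\<lambda>p. S (fst p) *v a (snd p))"
    "orthonormal_on (K \<times> M) (\<lambda>p. T (fst p) *v b (snd p))"
    by (auto simp: orthonormal_on_def prod_eq_iff)
  moreover have "tensor_op (S q) (T k) *v \<psi> = (\<Sum>m\<in>M. lam m *s tensor_vec (S q *v a m) (T k *v b m))"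
    for q k
    by (simp add: \<psi> tensor_op_mult_sum)
  ultimately show ?thesis
    using M by blast
qed

section \<open>Balanced splitting maps\<close>

lemma intertwine_vector: "X ** B = C ** X \<Longrightarrow> X *v (B *v w) = C *v (X *v w)"
  by (simp add: matrix_vector_mul_assoc)

lemma intertwine_adjoint: "B ** cadj X = cadj X ** C \<Longrightarrow> X ** cadj B = cadj C ** X"
  by (metis cadj_cadj cadj_mult)

lemma balanced_factor_tensor_form:
  fixes X :: "complex^'h::finite^('l::finite \<times> 'r::finite)"
  assumes bal: "balanced X" and fac: "factor (stloc_L X)"
  obtains Q :: "(complex^'h^'h) set" and K :: "(complex^'h) set" and e S T \<psi>
  where "finite Q" "finite K" "orthonormal_on (Q \<times> K) (\<lambda>p. e (fst p) (snd p))"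
    "\<And>w. w = (\<Sum>p\<in>Q \<times> K. cinner (e (fst p) (snd p)) w *s e (fst p) (snd p))"
    "\<And>q k. q \<in> Q \<Longrightarrow> k \<in> K \<Longrightarrow> X *v e q k = tensor_op (S q) (T k) *v \<psi>"
    "\<And>q q'. q \<in> Q \<Longrightarrow> q' \<in> Q \<Longrightarrow>
      tensor_op (cadj (S q) ** S q') (mat 1) *v \<psi> = (if q = q' then 1 else 0) *s \<psi>"
    "\<And>k k'. k \<in> K \<Longrightarrow> k' \<in> K \<Longrightarrow>
      tensor_op (mat 1) (cadj (T k) ** T k') *v \<psi> = (if k = k' then 1 else 0) *s \<psi>"
proof -
  obtain Q q0 V K where "q0 \<in> Q" "K \<noteq> {}" and units: "factor_matrix_units (stloc_L X) Q q0 V K"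
    using factor_matrix_units_exist[OF fac] by blast
  interpret factor_matrix_units "stloc_L X" Q q0 V K
    by (rule units)
  obtain k0 where "k0 \<in> K"
    using \<open>K \<noteq> {}\<close> by blast
  have "\<forall>q\<in>Q. \<exists>S. E q q0 ** cadj X = cadj X ** tensor_op S (mat 1) \<and> X ** E q q0 = tensor_op S (mat 1) ** X"
    using E_in \<open>q0 \<in> Q\<close> by (simp add: stloc_L_def)
  from bchoice[OF this] obtain S
    where S: "\<forall>q\<in>Q. E q q0 ** cadj X = cadj X ** tensor_op (S q) (mat 1) \<and> X ** E q q0 = tensor_op (S q) (mat 1) ** X"
    by blast
  have "F k k0 \<in> stloc_R X" if "k \<in> K" for k
    using F_in_commutant[OF that \<open>k0 \<in> K\<close>] bal by (simp add: balanced_def)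
  then have "\<forall>k\<in>K. \<exists>T. F k k0 ** cadj X = cadj X ** tensor_op (mat 1) T \<and> X ** F k k0 = tensor_op (mat 1) T ** X"
    by (simp add: stloc_R_def)
  from bchoice[OF this] obtain T
    where T: "\<forall>k\<in>K. F k k0 ** cadj X = cadj X ** tensor_op (mat 1) (T k) \<and> X ** F k k0 = tensor_op (mat 1) (T k) ** X"
    by blast
  have S_int: "X ** E q q0 = tensor_op (S q) (mat 1) ** X"
    and S_adj: "X ** cadj (E q q0) = tensor_op (cadj (S q)) (mat 1) ** X" if "q \<in> Q" for q
    using S that intertwine_adjoint[of "E q q0" X "tensor_op (S q) (mat 1)"] by (auto simp: cadj_tensor_op)
  have T_int: "X ** F k k0 = tensor_op (mat 1) (T k) ** X"
    and T_adj: "X ** cadj (F k k0) = tensor_op (mat 1) (cadj (T k)) ** X" if "k \<in> K" for k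
    using T that intertwine_adjoint[of "F k k0" X "tensor_op (mat 1) (T k)"] by (auto simp: cadj_tensor_op)
  define \<psi> where "\<psi> = X *v e q0 k0"
  have "X *v e q k = tensor_op (S q) (T k) *v \<psi>" if "q \<in> Q" "k \<in> K" for q k
  proof -
    have "e q k = E q q0 *v (F k k0 *v e q0 k0)"
      using that \<open>q0 \<in> Q\<close> \<open>k0 \<in> K\<close> by (simp add: E_e F_e)
    then have "X *v e q k = tensor_op (S q) (mat 1) *v (tensor_op (mat 1) (T k) *v \<psi>)"
      by (simp add: \<psi>_def intertwine_vector[OF S_int[OF that(1)]] intertwine_vector[OF T_int[OF that(2)]])
    then show ?thesis
      by (simp add: matrix_vector_mul_assoc tensor_op_mult)
  qed
  moreover have "tensor_op (cadj (S q) ** S q') (mat 1) *v \<psi> = (if q = q' then 1 else 0) *s \<psi>"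
    if "q \<in> Q" "q' \<in> Q" for q q'
  proof -
    have "tensor_op (cadj (S q) ** S q') (mat 1) *v \<psi> = tensor_op (cadj (S q)) (mat 1) *v (tensor_op (S q') (mat 1) *v \<psi>)"
      by (simp add: matrix_vector_mul_assoc tensor_op_mult)
    also have "\<dots> = X *v (cadj (E q q0) *v (E q' q0 *v e q0 k0))"
      by (simp add: \<psi>_def intertwine_vector[OF S_adj[OF that(1)]] intertwine_vector[OF S_int[OF that(2)]])
    finally show ?thesis
      using that \<open>q0 \<in> Q\<close> \<open>k0 \<in> K\<close> by (simp add: cadj_E E_e \<psi>_def)
  qed
  moreover have "tensor_op (mat 1) (cadj (T k) ** T k') *v \<psi> = (if k = k' then 1 else 0) *s \<psi>"
    if "k \<in> K" "k' \<in> K" for k k'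
  proof -
    have "tensor_op (mat 1) (cadj (T k) ** T k') *v \<psi> = tensor_op (mat 1) (cadj (T k)) *v (tensor_op (mat 1) (T k') *v \<psi>)"
      by (simp add: matrix_vector_mul_assoc tensor_op_mult)
    also have "\<dots> = X *v (cadj (F k k0) *v (F k' k0 *v e q0 k0))"
      by (simp add: \<psi>_def intertwine_vector[OF T_adj[OF that(1)]] intertwine_vector[OF T_int[OF that(2)]])
    finally show ?thesis
      using that \<open>q0 \<in> Q\<close> \<open>k0 \<in> K\<close> by (simp add: cadj_F F_e \<psi>_def)
  qed
  ultimately show ?thesis
    by (rule that[OF finite_Q finite_K e_orthonormal e_expansion])
qed

lemma tensor_decomposition_nat_indexed:
  fixes X :: "complex^'h::finite^('l::finite \<times> 'r::finite)"
    and e :: "'q \<Rightarrow> 'k \<Rightarrow> complex^'h" and f :: "'q \<Rightarrow> 'm \<Rightarrow> complex^'l"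
    and g :: "'k \<Rightarrow> 'm \<Rightarrow> complex^'r" and lam :: "'m \<Rightarrow> complex"
  assumes fin: "finite Q" "finite K" "finite M"
    and e: "orthonormal_on (Q \<times> K) (\<lambda>p. e (fst p) (snd p))"
    and span: "\<And>w. w = (\<Sum>p\<in>Q \<times> K. cinner (e (fst p) (snd p)) w *s e (fst p) (snd p))"
    and f: "orthonormal_on (Q \<times> M) (\<lambda>p. f (fst p) (snd p))"
    and g: "orthonormal_on (K \<times> M) (\<lambda>p. g (fst p) (snd p))"
    and Xe: "\<And>q k. q \<in> Q \<Longrightarrow> k \<in> K \<Longrightarrow> X *v e q k = (\<Sum>m\<in>M. lam m *s tensor_vec (f q m) (g k m))"
  shows "\<exists>(L::nat set) (R::nat set) (M::nat set)
           (e :: nat \<Rightarrow> nat \<Rightarrow> complex^'h) (f :: nat \<Rightarrow> nat \<Rightarrow> complex^'l)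
           (g :: nat \<Rightarrow> nat \<Rightarrow> complex^'r) (lam :: nat \<Rightarrow> complex).
           finite L \<and> finite R \<and> finite M \<and>
           (\<forall>p\<in>L \<times> R. \<forall>q\<in>L \<times> R.
              cinner (e (fst p) (snd p)) (e (fst q) (snd q)) = (if p = q then 1 else 0)) \<and>
           (\<forall>v :: complex^'h. \<exists>c :: nat \<Rightarrow> nat \<Rightarrow> complex.
              v = (\<Sum>p\<in>L \<times> R. c (fst p) (snd p) *s e (fst p) (snd p))) \<and>
           (\<forall>p\<in>L \<times> M. \<forall>q\<in>L \<times> M.
              cinner (f (fst p) (snd p)) (f (fst q) (snd q)) = (if p = q then 1 else 0)) \<and>
           (\<forall>p\<in>R \<times> M. \<forall>q\<in>R \<times> M.
              cinner (g (fst p) (snd p)) (g (fst q) (snd q)) = (if p = q then 1 else 0)) \<and>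
           (\<forall>l\<in>L. \<forall>r\<in>R.
              X *v e l r = (\<Sum>m\<in>M. lam m *s tensor_vec (f l m) (g r m)))"
proof -
  obtain hq where hq: "bij_betw hq {0..<card Q} Q"
    using ex_bij_betw_nat_finite[OF fin(1)] by blast
  obtain hk where hk: "bij_betw hk {0..<card K} K"
    using ex_bij_betw_nat_finite[OF fin(2)] by blast
  obtain hm where hm: "bij_betw hm {0..<card M} M"
    using ex_bij_betw_nat_finite[OF fin(3)] by blast
  define L R N where "L = {0..<card Q}" and "R = {0..<card K}" and "N = {0..<card M}"
  define e' where "e' i j = e (hq i) (hk j)" for i j
  define f' where "f' i m = f (hq i) (hm m)" for i m
  define g' where "g' j m = g (hk j) (hm m)" for j m
  define lam' where "lam' m = lam (hm m)" for m
  have reindex: "orthonormal_on (A' \<times> B') (\<lambda>p. u (h (fst p)) (h' (snd p)))"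
    if "orthonormal_on (A \<times> B) (\<lambda>p. u (fst p) (snd p))" "bij_betw h A' A" "bij_betw h' B' B"
    for A A' B B' u and h :: "nat \<Rightarrow> 'a" and h' :: "nat \<Rightarrow> 'b"
    using orthonormal_on_reindex[OF that(1), of "map_prod h h'" "A' \<times> B'"]
      bij_betw_map_prod[OF that(2,3)] by (auto simp: bij_betw_def)
  have "orthonormal_on (L \<times> R) (\<lambda>p. e' (fst p) (snd p))"
    using reindex[OF e hq hk] by (simp add: L_def R_def e'_def)
  moreover have "orthonormal_on (L \<times> N) (\<lambda>p. f' (fst p) (snd p))"
    using reindex[OF f hq hm] by (simp add: L_def N_def f'_def)
  moreover have "orthonormal_on (R \<times> N) (\<lambda>p. g' (fst p) (snd p))"
    using reindex[OF g hk hm] by (simp add: R_def N_def g'_def)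
  moreover have "\<forall>v. \<exists>c. v = (\<Sum>p\<in>L \<times> R. c (fst p) (snd p) *s e' (fst p) (snd p))"
  proof
    fix v
    have "v = (\<Sum>p\<in>L \<times> R. cinner (e' (fst p) (snd p)) v *s e' (fst p) (snd p))"
      using span[of v] sum.reindex_bij_betw[OF bij_betw_map_prod[OF hq hk],
          of "\<lambda>p. cinner (e (fst p) (snd p)) v *s e (fst p) (snd p)"]
      by (simp add: L_def R_def e'_def)
    then show "\<exists>c. v = (\<Sum>p\<in>L \<times> R. c (fst p) (snd p) *s e' (fst p) (snd p))"
      by (rule exI[of _ "\<lambda>i j. cinner (e' i j) v"])
  qed
  moreover have "X *v e' l r = (\<Sum>m\<in>N. lam' m *s tensor_vec (f' l m) (g' r m))" if "l \<in> L" "r \<in> R" for l r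
  proof -
    have "hq l \<in> Q" "hk r \<in> K"
      using that bij_betwE[OF hq] bij_betwE[OF hk] by (auto simp: L_def R_def)
    then show ?thesis
      using Xe sum.reindex_bij_betw[OF hm, of "\<lambda>m. lam m *s tensor_vec (f (hq l) m) (g (hk r) m)"]
      by (simp add: N_def e'_def f'_def g'_def lam'_def)
  qed
  moreover have "finite L" "finite R" "finite N"
    by (simp_all add: L_def R_def N_def)
  ultimately show ?thesis
    unfolding orthonormal_on_def
    by (intro exI[of _ L] exI[of _ R] exI[of _ N] exI[of _ e'] exI[of _ f'] exI[of _ g'] exI[of _ lam'])
      blast
qed

theorem mainTheorem13:
  fixes X :: "complex^'h::finite^('l::finite \<times> 'r::finite)"
  assumes "splitting_map X"
    and "balanced X"
    and "factor (stloc_L X)"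
  shows "\<exists>(L::nat set) (R::nat set) (M::nat set)
           (e :: nat \<Rightarrow> nat \<Rightarrow> complex^'h) (f :: nat \<Rightarrow> nat \<Rightarrow> complex^'l)
           (g :: nat \<Rightarrow> nat \<Rightarrow> complex^'r) (lam :: nat \<Rightarrow> complex).
           finite L \<and> finite R \<and> finite M \<and>
           (\<forall>p\<in>L \<times> R. \<forall>q\<in>L \<times> R.
              cinner (e (fst p) (snd p)) (e (fst q) (snd q)) = (if p = q then 1 else 0)) \<and>
           (\<forall>v :: complex^'h. \<exists>c :: nat \<Rightarrow> nat \<Rightarrow> complex.
              v = (\<Sum>p\<in>L \<times> R. c (fst p) (snd p) *s e (fst p) (snd p))) \<and>
           (\<forall>p\<in>L \<times> M. \<forall>q\<in>L \<times> M.
              cinner (f (fst p) (snd p)) (f (fst q) (snd q)) = (if p = q then 1 else 0)) \<and>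
           (\<forall>p\<in>R \<times> M. \<forall>q\<in>R \<times> M.
              cinner (g (fst p) (snd p)) (g (fst q) (snd q)) = (if p = q then 1 else 0)) \<and>
           (\<forall>l\<in>L. \<forall>r\<in>R.
              X *v e l r = (\<Sum>m\<in>M. lam m *s tensor_vec (f l m) (g r m)))"
proof -
  obtain Q :: "(complex^'h^'h) set" and K :: "(complex^'h) set" and e S T \<psi>
    where QK: "finite Q" "finite K" "orthonormal_on (Q \<times> K) (\<lambda>p. e (fst p) (snd p))"
      "\<And>w. w = (\<Sum>p\<in>Q \<times> K. cinner (e (fst p) (snd p)) w *s e (fst p) (snd p))"
    and Xe: "\<And>q k. q \<in> Q \<Longrightarrow> k \<in> K \<Longrightarrow> X *v e q k = tensor_op (S q) (T k) *v \<psi>"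
    and S: "\<And>q q'. q \<in> Q \<Longrightarrow> q' \<in> Q \<Longrightarrow>
      tensor_op (cadj (S q) ** S q') (mat 1) *v \<psi> = (if q = q' then 1 else 0) *s \<psi>"
    and T: "\<And>k k'. k \<in> K \<Longrightarrow> k' \<in> K \<Longrightarrow>
      tensor_op (mat 1) (cadj (T k) ** T k') *v \<psi> = (if k = k' then 1 else 0) *s \<psi>"
    using balanced_factor_tensor_form[OF assms(2,3)] by blast
  obtain M :: "(complex^'r) set" and a b lam where "finite M"
    and a: "orthonormal_on (Q \<times> M) (\<lambda>p. S (fst p) *v a (snd p))"
    and b: "orthonormal_on (K \<times> M) (\<lambda>p. T (fst p) *v b (snd p))"
    and \<psi>: "\<forall>q k. tensor_op (S q) (T k) *v \<psi> = (\<Sum>m\<in>M. lam m *s tensor_vec (S q *v a m) (T k *v b m))"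
    using schmidt_transport[where Q = Q and K = K, OF S T] by blast
  have "X *v e q k = (\<Sum>m\<in>M. lam m *s tensor_vec (S q *v a m) (T k *v b m))" if "q \<in> Q" "k \<in> K" for q k
    using Xe[OF that] \<psi> by simp
  then show ?thesis
    by (rule tensor_decomposition_nat_indexed[where f = "\<lambda>q m. S q *v a m" and g = "\<lambda>k m. T k *v b m",
          OF QK(1,2) \<open>finite M\<close> QK(3,4) a b])
qed

end
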